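(* Let $A_1,\dots,A_n,B_1,\dots,B_n$ be positive definite matrices with $mI\le A_i,B_i\le MI$ for all $i$ and some scalars $0<m<M$, and put $h=M/m$. Then for all $p\in(-\infty,1]\setminus\{0\}$, \[K(h,p)^{1/p}\Big(\mathrm{Tr}\Big[\Big(\sum_{i=1}^nA_i^p\Big)^{1/p}\Big]+\mathrm{Tr}\Big[\Big(\sum_{i=1}^nB_i^p\Big)^{1/p}\Big]\Big)\le\mathrm{Tr}\Big[\Big(\sum_{i=1}^n(A_i+B_i)^p\Big)^{1/p}\Big]\le K(h,p)^{-1/p}\Big(\mathrm{Tr}\Big[\Big(\sum_{i=1}^nA_i^p\Big)^{1/p}\Big]+\mathrm{Tr}\Big[\Big(\sum_{i=1}^nB_i^p\Big)^{1/p}\Big]\Big),\] and for all $p\ge1$, \[K(h,p)^{-1/p}\Big(\mathrm{Tr}\Big[\Big(\sum_{i=1}^nA_i^p\Big)^{1/p}\Big]+\mathrm{Tr}\Big[\Big(\sum_{i=1}^nB_i^p\Big)^{1/p}\Big]\Big)\le\mathrm{Tr}\Big[\Big(\sum_{i=1}^n(A_i+B_i)^p\Big)^{1/p}\Big]\le K(h,p)^{1/p}\Big(\mathrm{Tr}\Big[\Big(\sum_{i=1}^nA_i^p\Big)^{1/p}\Big]+\mathrm{Tr}\Big[\Big(\sum_{i=1}^nB_i^p\Big)^{1/p}\Big]\Big).\]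
   Context: $\mathrm{Tr}$ is the trace, $\le$ the Löwner order. Generalized Kantorovich constant: $K(h,p)=\frac{h^p-h}{(p-1)(h-1)}\Big(\frac{p-1}{p}\frac{h^p-1}{h^p-h}\Big)^p$ (with $K(h,1)=1$ by continuity). *)

theory Defs
  imports "Jordan_Normal_Form.Matrix"
begin

definition cadj :: "complex mat \<Rightarrow> complex mat" where
  "cadj A = mat (dim_col A) (dim_row A) (\<lambda>(i,j). cnj (A $$ (j,i)))"

definition mtrace :: "complex mat \<Rightarrow> complex" where
  "mtrace A = (\<Sum>i<dim_row A. A $$ (i,i))"

definition hermitian :: "nat \<Rightarrow> complex mat \<Rightarrow> bool" where
  "hermitian d A \<longleftrightarrow> A \<in> carrier_mat d d \<and> cadj A = A"

definition unitary :: "nat \<Rightarrow> complex mat \<Rightarrow> bool" where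
  "unitary d U \<longleftrightarrow> U \<in> carrier_mat d d \<and> U * cadj U = 1\<^sub>m d \<and> cadj U * U = 1\<^sub>m d"

definition qform :: "complex mat \<Rightarrow> complex vec \<Rightarrow> complex" where
  "qform A v = conjugate v \<bullet> (A *\<^sub>v v)"

definition pos_semidef :: "nat \<Rightarrow> complex mat \<Rightarrow> bool" where
  "pos_semidef d A \<longleftrightarrow> hermitian d A \<and> (\<forall>v \<in> carrier_vec d. 0 \<le> Re (qform A v))"

definition pos_def :: "nat \<Rightarrow> complex mat \<Rightarrow> bool" where
  "pos_def d A \<longleftrightarrow> hermitian d A \<and> (\<forall>v \<in> carrier_vec d. v \<noteq> 0\<^sub>v d \<longrightarrow> 0 < Re (qform A v))"

definition loewner_le :: "nat \<Rightarrow> complex mat \<Rightarrow> complex mat \<Rightarrow> bool" where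
  "loewner_le d A B \<longleftrightarrow> hermitian d A \<and> hermitian d B \<and> pos_semidef d (B - A)"

text \<open>Functional calculus: f(A) = U diag(f(lambda_i)) U^* where A = U diag(lambda_i) U^*
 with U unitary and lambda_i real (spectral theorem; the result is independent of the
 decomposition).\<close>
definition mat_fun :: "nat \<Rightarrow> (real \<Rightarrow> real) \<Rightarrow> complex mat \<Rightarrow> complex mat" where
  "mat_fun d f A = (THE X. \<exists>U lam. unitary d U \<and>
      A = U * mat_diag d (\<lambda>i. complex_of_real (lam i)) * cadj U \<and>
      X = U * mat_diag d (\<lambda>i. complex_of_real (f (lam i))) * cadj U)"

definition mat_powr :: "nat \<Rightarrow> complex mat \<Rightarrow> real \<Rightarrow> complex mat" where
  "mat_powr d A p = mat_fun d (\<lambda>x. x powr p) A"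

fun msum :: "nat \<Rightarrow> (nat \<Rightarrow> complex mat) \<Rightarrow> nat \<Rightarrow> complex mat" where
  "msum d f 0 = 0\<^sub>m d d"
| "msum d f (Suc k) = msum d f k + f k"

definition Kant :: "real \<Rightarrow> real \<Rightarrow> real" where
  "Kant h p = (if p = 1 then 1 else
     (h powr p - h) / ((p - 1) * (h - 1)) * (((p - 1) / p) * ((h powr p - 1) / (h powr p - h))) powr p)"

end

theory Submission
  imports Defs "Jordan_Normal_Form.Schur_Decomposition"
begin

(* Diagonalise S = sum_i A_i^p as U diag(sigma) U^*, and let u_k be the columns of U. Then
   Tr S^(1/p) = sum_k (u_k^* S u_k)^(1/p) and Tr A_i = sum_k u_k^* A_i u_k. Writing
   A_i = V_i diag(lambda_i) V_i^*, both u_k^* A_i^p u_k and u_k^* A_i u_k are averages of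
   lambda_ij^p and lambda_ij with the same probability weights |(V_i^* u_k)_j|^2, where
   lambda_ij lies in [m, M]. The Kantorovich inequality of Mond and Pecaric for such averages
   therefore places Tr[(sum_i A_i^p)^(1/p)] between n^(1/p - 1) sum_i Tr A_i and K(h,p)^(1/p)
   times this value. The reference value is additive in the family, and A_i + B_i has its
   spectrum in [2m, 2M], with the same ratio h; comparing the three estimates gives the claim. *)

lemma cadj_dims [simp]: "dim_row (cadj A) = dim_col A" "dim_col (cadj A) = dim_row A"
  by (auto simp: cadj_def)

lemma cadj_carrier [simp]: "A \<in> carrier_mat n m \<Longrightarrow> cadj A \<in> carrier_mat m n"
  by (auto simp: cadj_def)

lemma cadj_index [simp]:
  "i < dim_col A \<Longrightarrow> j < dim_row A \<Longrightarrow> cadj A $$ (i, j) = cnj (A $$ (j, i))"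
  by (auto simp: cadj_def)

lemma cadj_cadj [simp]: "cadj (cadj A) = A"
  by (rule eq_matI) auto

lemma cadj_one [simp]: "cadj (1\<^sub>m n) = 1\<^sub>m n"
  by (rule eq_matI) auto

lemma cadj_add: "A \<in> carrier_mat n m \<Longrightarrow> B \<in> carrier_mat n m \<Longrightarrow> cadj (A + B) = cadj A + cadj B"
  by (rule eq_matI) auto

lemma cadj_mult:
  assumes "A \<in> carrier_mat n k" "B \<in> carrier_mat k m"
  shows "cadj (A * B) = cadj B * cadj A"
  using assms by (intro eq_matI) (auto simp: scalar_prod_def cadj_def cnj_sum mult.commute)

lemma mult_carrier_mat_square [simp]:
  "A \<in> carrier_mat n n \<Longrightarrow> B \<in> carrier_mat n n \<Longrightarrow> A * B \<in> carrier_mat n n"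
  by auto

lemma unitaryD:
  assumes "unitary n U"
  shows "U \<in> carrier_mat n n" "U * cadj U = 1\<^sub>m n" "cadj U * U = 1\<^sub>m n"
  using assms unfolding unitary_def by auto

lemma unitary_cadj: "unitary n U \<Longrightarrow> unitary n (cadj U)"
  unfolding unitary_def by auto

lemma unitary_cancel_left:
  assumes "unitary n U" "X \<in> carrier_mat n n"
  shows "cadj U * (U * X) = X"
proof -
  have "cadj U * (U * X) = cadj U * U * X"
    using assms unitaryD[OF assms(1)] by (subst assoc_mult_mat[of _ n n _ n _ n]) auto
  then show ?thesis
    using assms unitaryD[OF assms(1)] by simp
qed

lemma unitary_cancel_right:
  assumes "unitary n U" "X \<in> carrier_mat n n"
  shows "U * (cadj U * X) = X"
  using unitary_cancel_left[OF unitary_cadj[OF assms(1)] assms(2)] by simp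

lemma unitary_mult:
  assumes U: "unitary n U" and V: "unitary n V"
  shows "unitary n (U * V)"
proof -
  note Uc = unitaryD(1)[OF U] and Vc = unitaryD(1)[OF V]
  have "U * V * cadj (U * V) = U * (V * (cadj V * cadj U))"
    using Uc Vc by (simp add: cadj_mult assoc_mult_mat[of U n n V n _ n])
  also have "\<dots> = 1\<^sub>m n"
    using unitary_cancel_right[OF V cadj_carrier[OF Uc]] unitaryD(2)[OF U] by simp
  finally have "U * V * cadj (U * V) = 1\<^sub>m n" .
  moreover have "cadj (U * V) * (U * V) = cadj V * (cadj U * (U * V))"
    using Uc Vc by (simp add: cadj_mult assoc_mult_mat[of "cadj V" n n "cadj U" n _ n])
  then have "cadj (U * V) * (U * V) = 1\<^sub>m n"
    using unitary_cancel_left[OF U Vc] unitaryD[OF V] by simp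
  ultimately show ?thesis
    using Uc Vc unfolding unitary_def by auto
qed

abbreviation rdiag :: "nat \<Rightarrow> (nat \<Rightarrow> real) \<Rightarrow> complex mat" where
  "rdiag n lam \<equiv> mat_diag n (\<lambda>i. complex_of_real (lam i))"

lemma mat_diag_dims [simp]: "dim_row (mat_diag n f) = n" "dim_col (mat_diag n f) = n"
  by (simp_all add: mat_diag_def)

lemma cadj_rdiag [simp]: "cadj (rdiag n l) = rdiag n l"
  by (rule eq_matI) (auto simp: mat_diag_def)

lemma unitary_conj_cancel:
  assumes "unitary n U" "X \<in> carrier_mat n n"
  shows "cadj U * (U * X * cadj U) * U = X"
proof -
  note Uc = unitaryD(1)[OF assms(1)]
  have "cadj U * (U * X * cadj U) * U = cadj U * (U * (X * (cadj U * U)))"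
    using Uc assms(2) by (simp add: assoc_mult_mat[of _ n n _ n _ n] del: assoc_mult_mat)
  then show ?thesis
    using unitary_cancel_left[OF assms(1), of X] unitaryD[OF assms(1)] assms(2) by simp
qed

lemma hermitian_unitary_conj:
  "unitary n U \<Longrightarrow> hermitian n (U * rdiag n l * cadj U)"
  unfolding hermitian_def using unitaryD[of n U]
  by (auto simp: cadj_mult[of _ n n _ n] assoc_mult_mat[of _ n n _ n _ n])

section \<open>The spectral theorem\<close>

definition vec_normalize :: "complex vec \<Rightarrow> complex vec" where
  "vec_normalize w = complex_of_real (1 / sqrt (Re (w \<bullet>c w))) \<cdot>\<^sub>v w"

lemma vec_normalize_carrier [simp]: "w \<in> carrier_vec n \<Longrightarrow> vec_normalize w \<in> carrier_vec n"
  by (simp add: vec_normalize_def)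

lemma cscalar_prod_smult:
  fixes v w :: "complex vec"
  assumes "v \<in> carrier_vec n" "w \<in> carrier_vec n"
  shows "(a \<cdot>\<^sub>v v) \<bullet>c (b \<cdot>\<^sub>v w) = a * cnj b * (v \<bullet>c w)"
  using assms by (simp add: scalar_prod_def sum_distrib_left algebra_simps)

lemma vec_normalize_cscalar_prod:
  assumes w: "w \<in> carrier_vec n" and w0: "w \<bullet>c w \<noteq> 0"
  shows "vec_normalize w \<bullet>c vec_normalize w = 1"
proof -
  let ?r = "Re (w \<bullet>c w)"
  have ww: "w \<bullet>c w = complex_of_real ?r"
    using conjugate_square_ge_0_vec[of w] by (simp add: less_eq_complex_def complex_eq_iff)
  have r: "?r > 0"
    using conjugate_square_ge_0_vec[of w] w0 by (auto simp: less_eq_complex_def complex_eq_iff)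
  have "vec_normalize w \<bullet>c vec_normalize w =
      complex_of_real (1 / sqrt ?r) * complex_of_real (1 / sqrt ?r) * (w \<bullet>c w)"
    unfolding vec_normalize_def cscalar_prod_smult[OF w w] by simp
  also have "\<dots> = complex_of_real ((1 / sqrt ?r) * (1 / sqrt ?r) * ?r)"
    by (subst ww) (simp only: of_real_mult)
  also have "(1 / sqrt ?r) * (1 / sqrt ?r) * ?r = 1"
    using r by (simp add: field_simps)
  finally show ?thesis by simp
qed

lemma vec_normalize_orthogonal:
  assumes "v \<in> carrier_vec n" "w \<in> carrier_vec n" "v \<bullet>c w = 0"
  shows "vec_normalize v \<bullet>c vec_normalize w = 0"
  using assms unfolding vec_normalize_def by (simp add: cscalar_prod_smult[OF assms(1,2)])

lemma unitary_normalized_cols: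
  assumes orth: "corthogonal ws" and wsc: "set ws \<subseteq> carrier_vec n" and len: "length ws = n"
  shows "unitary n (mat_of_cols n (map vec_normalize ws))"
proof -
  define W where "W = mat_of_cols n (map vec_normalize ws)"
  have Wc: "W \<in> carrier_mat n n" unfolding W_def using len by auto
  have wsi: "i < n \<Longrightarrow> ws ! i \<in> carrier_vec n" for i using wsc len nth_mem by blast
  have colW: "i < n \<Longrightarrow> col W i = vec_normalize (ws ! i)" for i
    unfolding W_def using len wsi by (subst col_mat_of_cols) auto
  have "cadj W * W = 1\<^sub>m n"
  proof (rule eq_matI)
    fix i j assume "i < dim_row (1\<^sub>m n)" "j < dim_col (1\<^sub>m n)"
    then have i: "i < n" and j: "j < n" by auto
    have "(cadj W * W) $$ (i, j) = col W j \<bullet>c col W i"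
      using Wc i j by (simp add: scalar_prod_def cadj_def row_def col_def mult.commute)
    also have "\<dots> = 1\<^sub>m n $$ (i, j)"
    proof (cases "i = j")
      case True
      have "ws ! i \<bullet>c ws ! i \<noteq> 0" using orth i len unfolding corthogonal_def by auto
      then show ?thesis using True vec_normalize_cscalar_prod[OF wsi[OF i]] colW i by simp
    next
      case False
      then have "ws ! j \<bullet>c ws ! i = 0" using orth i j len unfolding corthogonal_def by auto
      then show ?thesis
        using False colW i j vec_normalize_orthogonal[OF wsi[OF j] wsi[OF i]] by simp
    qed
    finally show "(cadj W * W) $$ (i, j) = 1\<^sub>m n $$ (i, j)" .
  qed (use Wc in auto)
  moreover from this have "W * cadj W = 1\<^sub>m n"
    using mat_mult_left_right_inverse[OF cadj_carrier[OF Wc] Wc] by simp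
  ultimately show ?thesis
    using Wc unfolding W_def unitary_def by simp
qed

lemma unitary_completion:
  assumes u: "u \<in> carrier_vec n" and u1: "u \<bullet>c u = 1"
  obtains W where "unitary n W" "col W 0 = u"
proof -
  interpret cof_vec_space n "TYPE(complex)" .
  have u0: "u \<noteq> 0\<^sub>v n" using u1 by auto
  then have n0: "n > 0" using u by (cases n) auto
  define b where "b = basis_completion u"
  from basis_completion[OF u u0, folded b_def]
  have dist_b: "distinct b" and indep: "\<not> lin_dep (set b)" and bc: "set b \<subseteq> carrier_vec n"
    and hdb: "hd b = u" and len_b: "length b = n" by auto
  from hdb len_b n0 obtain vs where bv: "b = u # vs" by (cases b) auto
  define ws where "ws = gram_schmidt n b"
  from gram_schmidt_result[OF bc dist_b indep ws_def]
  have orth: "corthogonal ws" and wsc: "set ws \<subseteq> carrier_vec n" and len: "length ws = n"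
    using len_b by auto
  have "hd ws = u" unfolding ws_def bv using u by simp
  moreover have "ws \<noteq> []" using len n0 by auto
  ultimately have ws0: "ws ! 0 = u"
    by (simp add: hd_conv_nth)
  have "col (mat_of_cols n (map vec_normalize ws)) 0 = vec_normalize u"
    using len n0 wsc ws0 u by (subst col_mat_of_cols) auto
  also have "vec_normalize u = u"
    using u1 unfolding vec_normalize_def by simp
  finally show thesis
    using that unitary_normalized_cols[OF orth wsc len] by blast
qed

definition diag_block :: "nat \<Rightarrow> complex \<Rightarrow> complex mat \<Rightarrow> complex mat" where
  "diag_block k a Y = mat (Suc k) (Suc k) (\<lambda>(i, j).
     if i = 0 \<and> j = 0 then a else if i = 0 \<or> j = 0 then 0 else Y $$ (i - 1, j - 1))"

lemma diag_block_carrier [simp]: "diag_block k a Y \<in> carrier_mat (Suc k) (Suc k)"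
  and diag_block_dims [simp]: "dim_row (diag_block k a Y) = Suc k" "dim_col (diag_block k a Y) = Suc k"
  by (simp_all add: diag_block_def)

lemma diag_block_index:
  "i < Suc k \<Longrightarrow> j < Suc k \<Longrightarrow> diag_block k a Y $$ (i, j) =
   (if i = 0 \<and> j = 0 then a else if i = 0 \<or> j = 0 then 0 else Y $$ (i - 1, j - 1))"
  by (simp add: diag_block_def)

lemma diag_block_mult:
  assumes Y: "Y \<in> carrier_mat k k" and Z: "Z \<in> carrier_mat k k"
  shows "diag_block k a Y * diag_block k b Z = diag_block k (a * b) (Y * Z)"
proof (rule eq_matI)
  fix i j assume "i < dim_row (diag_block k (a * b) (Y * Z))" "j < dim_col (diag_block k (a * b) (Y * Z))"
  then have i: "i < Suc k" and j: "j < Suc k" by auto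
  have "(diag_block k a Y * diag_block k b Z) $$ (i, j) =
      (\<Sum>l<Suc k. diag_block k a Y $$ (i, l) * diag_block k b Z $$ (l, j))"
    using i j by (simp add: scalar_prod_def atLeast0LessThan)
  also have "\<dots> = diag_block k a Y $$ (i, 0) * diag_block k b Z $$ (0, j) +
      (\<Sum>l<k. diag_block k a Y $$ (i, Suc l) * diag_block k b Z $$ (Suc l, j))"
    by (rule sum.lessThan_Suc_shift)
  also have "\<dots> = diag_block k (a * b) (Y * Z) $$ (i, j)"
  proof (cases i)
    case 0
    then show ?thesis using i j by (simp add: diag_block_index)
  next
    case (Suc i')
    show ?thesis
    proof (cases j)
      case 0
      then show ?thesis using i j Suc by (simp add: diag_block_index)
    next
      case (Suc j')
      have "(Y * Z) $$ (i', j') = (\<Sum>l<k. Y $$ (i', l) * Z $$ (l, j'))"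
        using Y Z \<open>i = Suc i'\<close> Suc i j by (simp add: scalar_prod_def atLeast0LessThan)
      then show ?thesis using i j \<open>i = Suc i'\<close> Suc by (simp add: diag_block_index)
    qed
  qed
  finally show "(diag_block k a Y * diag_block k b Z) $$ (i, j) = diag_block k (a * b) (Y * Z) $$ (i, j)" .
qed auto

lemma cadj_diag_block: "Y \<in> carrier_mat k k \<Longrightarrow> cadj (diag_block k a Y) = diag_block k (cnj a) (cadj Y)"
  by (rule eq_matI) (auto simp: diag_block_index)

lemma diag_block_one: "diag_block k 1 (1\<^sub>m k) = 1\<^sub>m (Suc k)"
  by (rule eq_matI) (auto simp: diag_block_index)

lemma unitary_diag_block:
  assumes "unitary k U"
  shows "unitary (Suc k) (diag_block k 1 U)"
  using unitaryD[OF assms] unfolding unitary_def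
  by (simp add: cadj_diag_block diag_block_mult diag_block_one)

lemma rdiag_Suc: "rdiag (Suc k) l = diag_block k (complex_of_real (l 0)) (rdiag k (\<lambda>i. l (Suc i)))"
  by (rule eq_matI) (auto simp: diag_block_index mat_diag_def)

lemma exists_unit_eigenvector:
  fixes A :: "complex mat"
  assumes A: "A \<in> carrier_mat (Suc k) (Suc k)"
  obtains u e where "u \<in> carrier_vec (Suc k)" "u \<bullet>c u = 1" "A *\<^sub>v u = e \<cdot>\<^sub>v u"
proof -
  obtain es where cp: "char_poly A = (\<Prod>a\<leftarrow>es. [:- a, 1:])" and len: "length es = Suc k"
    using char_poly_factorized[OF A] by auto
  then obtain e es' where "es = e # es'" by (cases es) auto
  then have "poly (char_poly A) e = 0" unfolding cp by simp
  then have "eigenvalue A e"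
    using eigenvalue_root_char_poly[OF A] by simp
  then have "eigenvector A (find_eigenvector A e) e"
    using find_eigenvector[OF A] by blast
  then obtain v where v: "v \<in> carrier_vec (Suc k)" "v \<noteq> 0\<^sub>v (Suc k)" "A *\<^sub>v v = e \<cdot>\<^sub>v v"
    using A unfolding eigenvector_def by auto
  show thesis
  proof
    show "vec_normalize v \<in> carrier_vec (Suc k)" using v by simp
    show "vec_normalize v \<bullet>c vec_normalize v = 1"
      using v by (intro vec_normalize_cscalar_prod) auto
    show "A *\<^sub>v vec_normalize v = e \<cdot>\<^sub>v vec_normalize v"
      unfolding vec_normalize_def using A v by (simp add: mult_mat_vec smult_smult_assoc mult.commute)
  qed
qed

lemma hermitian_diag_block:
  assumes B: "hermitian (Suc k) B" and col0: "col B 0 = e \<cdot>\<^sub>v unit_vec (Suc k) 0"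
  defines "Y \<equiv> mat k k (\<lambda>(i, j). B $$ (Suc i, Suc j))"
  shows "B = diag_block k (complex_of_real (Re e)) Y" "hermitian k Y"
proof -
  have Bc: "B \<in> carrier_mat (Suc k) (Suc k)" and hB: "cadj B = B"
    using B unfolding hermitian_def by auto
  have B_i0: "i < Suc k \<Longrightarrow> B $$ (i, 0) = (if i = 0 then e else 0)" for i
    using arg_cong[OF col0, of "\<lambda>x. x $ i"] Bc by (auto simp: unit_vec_def)
  have B_sym: "B $$ (i, j) = cnj (B $$ (j, i))" if "i < Suc k" "j < Suc k" for i j
  proof -
    have "B $$ (i, j) = cadj B $$ (i, j)" using hB by simp
    also have "\<dots> = cnj (B $$ (j, i))" using Bc that by simp
    finally show ?thesis .
  qed
  have B00: "B $$ (0, 0) = e" using B_i0[of 0] by simp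
  have e_cnj: "cnj e = e" by (metis B00 B_sym zero_less_Suc)
  then have "Im e = 0" by (metis cnj.sel(2) neg_equal_zero)
  then have e: "complex_of_real (Re e) = e" by (simp add: complex_eq_iff)
  show "B = diag_block k (complex_of_real (Re e)) Y"
  proof (rule eq_matI)
    fix i j assume "i < dim_row (diag_block k (complex_of_real (Re e)) Y)"
      "j < dim_col (diag_block k (complex_of_real (Re e)) Y)"
    then have i: "i < Suc k" and j: "j < Suc k" by auto
    have "B $$ (0, j) = cnj (B $$ (j, 0))" using B_sym[OF zero_less_Suc j] .
    also have "\<dots> = (if j = 0 then e else 0)" using B_i0[OF j] e_cnj by simp
    finally have B_0j: "B $$ (0, j) = (if j = 0 then e else 0)" .
    show "B $$ (i, j) = diag_block k (complex_of_real (Re e)) Y $$ (i, j)"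
    proof (cases "i = 0 \<or> j = 0")
      case True
      then show ?thesis using B_i0[OF i] B_0j i j e by (auto simp: diag_block_index)
    next
      case False
      then show ?thesis using i j by (cases i; cases j) (simp_all add: diag_block_index Y_def)
    qed
  qed (use Bc in auto)
  show "hermitian k Y"
    unfolding hermitian_def
  proof
    show "cadj Y = Y"
    proof (rule eq_matI)
      fix i j assume "i < dim_row Y" "j < dim_col Y"
      then have i: "i < k" and j: "j < k" unfolding Y_def by auto
      then show "cadj Y $$ (i, j) = Y $$ (i, j)"
        using B_sym[of "Suc j" "Suc i"] by (simp add: Y_def)
    qed (auto simp: Y_def)
  qed (simp add: Y_def)
qed

lemma hermitian_deflation:
  assumes "hermitian (Suc k) A"
  obtains W e Y where "unitary (Suc k) W" "hermitian k Y"
    "A = W * diag_block k (complex_of_real e) Y * cadj W"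
proof -
  have A: "A \<in> carrier_mat (Suc k) (Suc k)" and hA: "cadj A = A"
    using assms unfolding hermitian_def by auto
  obtain u e where u: "u \<in> carrier_vec (Suc k)" "u \<bullet>c u = 1" and Au: "A *\<^sub>v u = e \<cdot>\<^sub>v u"
    using exists_unit_eigenvector[OF A] .
  obtain W where W: "unitary (Suc k) W" and colW: "col W 0 = u"
    using unitary_completion[OF u] .
  note Wc = unitaryD(1)[OF W]
  define B where "B = cadj W * A * W"
  have hB: "hermitian (Suc k) B"
    unfolding B_def hermitian_def using Wc A hA
    by (simp add: cadj_mult[of _ "Suc k" "Suc k" _ "Suc k"] assoc_mult_mat[of _ "Suc k" "Suc k" _ "Suc k" _ "Suc k"])
  have "col B 0 = (cadj W * A) *\<^sub>v col W 0"
    unfolding B_def using Wc A by (subst col_mult2[of _ "Suc k" "Suc k"]) auto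
  also have "\<dots> = cadj W *\<^sub>v (e \<cdot>\<^sub>v u)"
    unfolding colW using Wc A u Au by (subst assoc_mult_mat_vec[of _ "Suc k" "Suc k"]) auto
  also have "\<dots> = e \<cdot>\<^sub>v (cadj W *\<^sub>v col W 0)"
    unfolding colW using mult_mat_vec[OF cadj_carrier[OF Wc] u(1)] by simp
  also have "cadj W *\<^sub>v col W 0 = col (cadj W * W) 0"
    using Wc by (subst col_mult2[of _ "Suc k" "Suc k"]) auto
  finally have "col B 0 = e \<cdot>\<^sub>v unit_vec (Suc k) 0"
    using unitaryD(3)[OF W] by simp
  from hermitian_diag_block[OF hB this] obtain Y where
    BY: "B = diag_block k (complex_of_real (Re e)) Y" and hY: "hermitian k Y" by blast
  show thesis
  proof (rule that[OF W hY])
    have "W * B * cadj W = W * cadj W * A * (W * cadj W)"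
      unfolding B_def using Wc A by (simp add: assoc_mult_mat[of _ "Suc k" "Suc k" _ "Suc k" _ "Suc k"])
    also have "\<dots> = A" using unitaryD(2)[OF W] A by simp
    finally show "A = W * diag_block k (complex_of_real (Re e)) Y * cadj W"
      unfolding BY by simp
  qed
qed

theorem hermitian_spectral:
  assumes "hermitian n A"
  shows "\<exists>U lam. unitary n U \<and> A = U * rdiag n lam * cadj U"
  using assms
proof (induction n arbitrary: A)
  case 0
  then have "A = 1\<^sub>m 0 * rdiag 0 (\<lambda>_. 0) * cadj (1\<^sub>m 0)"
    unfolding hermitian_def by (intro eq_matI) auto
  moreover have "unitary 0 (1\<^sub>m 0)" unfolding unitary_def by auto
  ultimately show ?case by (intro exI[of _ "1\<^sub>m 0"] exI[of _ "\<lambda>_. 0"] conjI)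
next
  case (Suc k)
  obtain W e Y where W: "unitary (Suc k) W" and hY: "hermitian k Y"
    and AW: "A = W * diag_block k (complex_of_real e) Y * cadj W"
    using hermitian_deflation[OF Suc.prems] .
  obtain V lam where V: "unitary k V" and YV: "Y = V * rdiag k lam * cadj V"
    using Suc.IH[OF hY] by blast
  define lam' where "lam' i = (if i = 0 then e else lam (i - 1))" for i
  define E where "E = diag_block k 1 V"
  have E: "unitary (Suc k) E"
    unfolding E_def using unitary_diag_block[OF V] .
  have "rdiag (Suc k) lam' = diag_block k (complex_of_real e) (rdiag k lam)"
    unfolding rdiag_Suc lam'_def by simp
  then have "diag_block k (complex_of_real e) Y = E * rdiag (Suc k) lam' * cadj E"
    unfolding E_def YV using unitaryD(1)[OF V] by (simp add: cadj_diag_block diag_block_mult)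
  then have "A = (W * E) * rdiag (Suc k) lam' * cadj (W * E)"
    unfolding AW using unitaryD(1)[OF W] unitaryD(1)[OF E]
    by (simp add: cadj_mult[of _ "Suc k" "Suc k" _ "Suc k"] assoc_mult_mat[of _ "Suc k" "Suc k" _ "Suc k" _ "Suc k"])
  moreover have "unitary (Suc k) (W * E)"
    using unitary_mult[OF W E] .
  ultimately show ?case by (intro exI[of _ "W * E"] exI[of _ lam'] conjI)
qed

section \<open>Functional calculus\<close>

text \<open>The unitary \<open>W = V\<^sup>* U\<close> intertwines the two diagonal matrices, so \<open>W\<^sub>i\<^sub>j \<noteq> 0\<close>
  only where \<open>l j = m i\<close>.\<close>

lemma unitary_diag_fun_cong:
  assumes U: "unitary n U" and V: "unitary n V"
    and eq: "U * rdiag n l * cadj U = V * rdiag n m * cadj V"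
  shows "U * rdiag n (\<lambda>i. f (l i)) * cadj U = V * rdiag n (\<lambda>i. f (m i)) * cadj V"
proof -
  note Uc = unitaryD(1)[OF U] and Vc = unitaryD(1)[OF V]
  define W where "W = cadj V * U"
  have Wc: "W \<in> carrier_mat n n" unfolding W_def using Uc Vc by simp
  have "W * rdiag n l = cadj V * (U * rdiag n l * cadj U) * U"
    unfolding W_def using Uc Vc unitaryD(3)[OF U]
    by (simp add: assoc_mult_mat[of _ n n _ n _ n] del: mult_carrier_mat)
  also have "\<dots> = rdiag n m * W"
    unfolding eq W_def using Uc Vc
    by (simp add: assoc_mult_mat[of _ n n _ n _ n] unitary_cancel_left[OF V] del: mult_carrier_mat)
  finally have WD: "W * rdiag n l = rdiag n m * W" .
  have WF: "W * rdiag n (\<lambda>i. f (l i)) = rdiag n (\<lambda>i. f (m i)) * W"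
  proof (rule eq_matI)
    fix i j assume "i < dim_row (rdiag n (\<lambda>i. f (m i)) * W)" "j < dim_col (rdiag n (\<lambda>i. f (m i)) * W)"
    then have i: "i < n" and j: "j < n" using Wc by auto
    have "W $$ (i, j) * complex_of_real (l j) = complex_of_real (m i) * W $$ (i, j)"
      using arg_cong[OF WD, of "\<lambda>X. X $$ (i, j)"] i j Wc
      by (simp add: mat_diag_mult_left[OF Wc] mat_diag_mult_right[OF Wc])
    then have "W $$ (i, j) * complex_of_real (f (l j)) = complex_of_real (f (m i)) * W $$ (i, j)"
      by (cases "W $$ (i, j) = 0") (auto simp: mult.commute)
    then show "(W * rdiag n (\<lambda>i. f (l i))) $$ (i, j) = (rdiag n (\<lambda>i. f (m i)) * W) $$ (i, j)"
      using i j Wc by (simp add: mat_diag_mult_left[OF Wc] mat_diag_mult_right[OF Wc])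
  qed (use Wc in auto)
  have "U * rdiag n (\<lambda>i. f (l i)) * cadj U = V * (W * rdiag n (\<lambda>i. f (l i))) * cadj U"
    unfolding W_def using Uc Vc
    by (simp add: assoc_mult_mat[of _ n n _ n _ n] unitary_cancel_right[OF V] del: mult_carrier_mat)
  also have "\<dots> = V * rdiag n (\<lambda>i. f (m i)) * (W * cadj U)"
    unfolding WF using Uc Vc Wc by (simp add: assoc_mult_mat[of _ n n _ n _ n] del: mult_carrier_mat)
  also have "W * cadj U = cadj V"
    unfolding W_def using Uc Vc unitaryD(2)[OF U]
    by (simp add: assoc_mult_mat[of _ n n _ n _ n] del: mult_carrier_mat)
  finally show ?thesis .
qed

lemma mat_fun_spectral:
  assumes U: "unitary n U" and A: "A = U * rdiag n l * cadj U"
  shows "mat_fun n f A = U * rdiag n (\<lambda>i. f (l i)) * cadj U"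
  unfolding mat_fun_def
proof (rule the_equality)
  show "\<exists>U' lam. unitary n U' \<and> A = U' * rdiag n lam * cadj U' \<and>
      U * rdiag n (\<lambda>i. f (l i)) * cadj U = U' * rdiag n (\<lambda>i. f (lam i)) * cadj U'"
    using U A by blast
next
  fix X
  assume "\<exists>U' lam. unitary n U' \<and> A = U' * rdiag n lam * cadj U' \<and>
      X = U' * rdiag n (\<lambda>i. f (lam i)) * cadj U'"
  then obtain U' lam where U': "unitary n U'" and A': "A = U' * rdiag n lam * cadj U'"
    and X: "X = U' * rdiag n (\<lambda>i. f (lam i)) * cadj U'" by blast
  show "X = U * rdiag n (\<lambda>i. f (l i)) * cadj U"
    unfolding X using unitary_diag_fun_cong[OF U' U, of lam l f] A A' by simp
qed

lemma mat_powr_spectral: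
  "unitary n U \<Longrightarrow> A = U * rdiag n l * cadj U \<Longrightarrow>
   mat_powr n A p = U * rdiag n (\<lambda>i. l i powr p) * cadj U"
  unfolding mat_powr_def by (rule mat_fun_spectral)

lemma qform_add:
  assumes "X \<in> carrier_mat n n" "Y \<in> carrier_mat n n" "v \<in> carrier_vec n"
  shows "qform (X + Y) v = qform X v + qform Y v"
  unfolding qform_def using assms
  by (simp add: add_mult_distrib_mat_vec[of _ n n] scalar_prod_add_distrib[of _ n])

lemma qform_minus:
  assumes "X \<in> carrier_mat n n" "Y \<in> carrier_mat n n" "v \<in> carrier_vec n"
  shows "qform (X - Y) v = qform X v - qform Y v"
  unfolding qform_def using assms
  by (simp add: minus_mult_distrib_mat_vec[of _ n n] scalar_prod_minus_distrib[of _ n])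

lemma qform_smult_one:
  fixes v :: "complex vec"
  assumes v: "v \<in> carrier_vec n"
  shows "qform (c \<cdot>\<^sub>m 1\<^sub>m n) v = c * (conjugate v \<bullet> v)"
proof -
  have "(c \<cdot>\<^sub>m 1\<^sub>m n) *\<^sub>v v = c \<cdot>\<^sub>v v"
  proof (rule eq_vecI)
    fix i assume "i < dim_vec (c \<cdot>\<^sub>v v)"
    then have i: "i < n" using v by simp
    have "((c \<cdot>\<^sub>m 1\<^sub>m n) *\<^sub>v v) $ i = (\<Sum>j = 0..<n. c * (if j = i then 1 else 0) * v $ j)"
      using i v by (simp add: scalar_prod_def)
    also have "\<dots> = (\<Sum>j = 0..<n. if j = i then c * v $ j else 0)"
      by (rule sum.cong) auto
    finally show "((c \<cdot>\<^sub>m 1\<^sub>m n) *\<^sub>v v) $ i = (c \<cdot>\<^sub>v v) $ i"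
      using i v by simp
  qed (use v in auto)
  then show ?thesis
    unfolding qform_def using v by simp
qed

lemma qform_msum:
  assumes "\<And>i. i < k \<Longrightarrow> f i \<in> carrier_mat d d" "v \<in> carrier_vec d"
  shows "qform (msum d f k) v = (\<Sum>i<k. qform (f i) v)"
  using assms(1)
proof (induction k)
  case 0
  then show ?case using assms(2) by (simp add: qform_def scalar_prod_def row_def)
next
  case (Suc k)
  have "msum d f k \<in> carrier_mat d d"
    using Suc.prems by (induction k) auto
  then show ?case
    using Suc assms(2) by (simp add: qform_add[of _ d])
qed

lemma cscalar_prod_mult_mat_vec:
  fixes A :: "complex mat"
  assumes A: "A \<in> carrier_mat n m" and u: "u \<in> carrier_vec n" and y: "y \<in> carrier_vec m"
  shows "conjugate u \<bullet> (A *\<^sub>v y) = conjugate (cadj A *\<^sub>v u) \<bullet> y"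
proof -
  have "conjugate u \<bullet> (A *\<^sub>v y) = (\<Sum>i<n. \<Sum>j<m. cnj (u $ i) * A $$ (i, j) * y $ j)"
    using A u y by (simp add: scalar_prod_def atLeast0LessThan sum_distrib_left mult.assoc)
  also have "\<dots> = (\<Sum>j<m. \<Sum>i<n. cnj (u $ i) * A $$ (i, j) * y $ j)"
    by (rule sum.swap)
  also have "\<dots> = conjugate (cadj A *\<^sub>v u) \<bullet> y"
    using A u y by (simp add: scalar_prod_def atLeast0LessThan sum_distrib_left sum_distrib_right cnj_sum mult.commute mult.left_commute)
  finally show ?thesis .
qed

lemma mat_diag_mult_vec_index:
  assumes "v \<in> carrier_vec n" "j < n"
  shows "(mat_diag n f *\<^sub>v v) $ j = f j * v $ j"
proof -
  have "(mat_diag n f *\<^sub>v v) $ j = (\<Sum>k = 0..<n. (if j = k then f k else 0) * v $ k)"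
    using assms by (simp add: scalar_prod_def mat_diag_def)
  also have "\<dots> = (\<Sum>k = 0..<n. if j = k then f k * v $ k else 0)"
    by (intro sum.cong) auto
  also have "\<dots> = f j * v $ j"
    using assms(2) by simp
  finally show ?thesis .
qed

lemma qform_unitary_diag:
  assumes V: "unitary n V" and u: "u \<in> carrier_vec n"
  shows "qform (V * rdiag n g * cadj V) u =
    complex_of_real (\<Sum>j<n. (cmod ((cadj V *\<^sub>v u) $ j))\<^sup>2 * g j)"
proof -
  note Vc = unitaryD(1)[OF V]
  define z where "z = cadj V *\<^sub>v u"
  have z: "z \<in> carrier_vec n" unfolding z_def using mult_mat_vec_carrier[OF cadj_carrier[OF Vc] u] .
  have "(V * rdiag n g * cadj V) *\<^sub>v u = (V * rdiag n g) *\<^sub>v z"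
    unfolding z_def using Vc u by (simp add: assoc_mult_mat_vec[of _ n n _ n])
  also have "\<dots> = V *\<^sub>v (rdiag n g *\<^sub>v z)"
    using assoc_mult_mat_vec[OF Vc mat_diag_dim z] .
  finally have "(V * rdiag n g * cadj V) *\<^sub>v u = V *\<^sub>v (rdiag n g *\<^sub>v z)" .
  then have "qform (V * rdiag n g * cadj V) u = conjugate z \<bullet> (rdiag n g *\<^sub>v z)"
    unfolding qform_def
    using cscalar_prod_mult_mat_vec[OF Vc u mult_mat_vec_carrier[OF mat_diag_dim z], folded z_def]
    by simp
  also have "\<dots> = (\<Sum>j<n. cnj (z $ j) * (rdiag n g *\<^sub>v z) $ j)"
    using z by (simp add: scalar_prod_def atLeast0LessThan del: index_mult_mat_vec)
  also have "\<dots> = (\<Sum>j<n. cnj (z $ j) * (complex_of_real (g j) * z $ j))"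
    using z by (intro sum.cong refl) (simp add: mat_diag_mult_vec_index del: index_mult_mat_vec)
  also have "\<dots> = (\<Sum>j<n. complex_of_real ((cmod (z $ j))\<^sup>2 * g j))"
  proof (intro sum.cong refl)
    fix j
    have sq: "cnj (z $ j) * z $ j = complex_of_real ((cmod (z $ j))\<^sup>2)"
      using complex_norm_square[of "z $ j"] by (simp add: mult.commute)
    have "cnj (z $ j) * (complex_of_real (g j) * z $ j) = complex_of_real (g j) * (cnj (z $ j) * z $ j)"
      by (simp only: ac_simps)
    also have "\<dots> = complex_of_real ((cmod (z $ j))\<^sup>2 * g j)"
      unfolding sq by (simp only: of_real_mult mult.commute)
    finally show "cnj (z $ j) * (complex_of_real (g j) * z $ j) = complex_of_real ((cmod (z $ j))\<^sup>2 * g j)" .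
  qed
  finally show ?thesis unfolding z_def by simp
qed

lemma unitary_weights_sum:
  assumes V: "unitary n V" and u: "u \<in> carrier_vec n" and u1: "conjugate u \<bullet> u = 1"
  shows "(\<Sum>j<n. (cmod ((cadj V *\<^sub>v u) $ j))\<^sup>2) = 1"
proof -
  have "complex_of_real (\<Sum>j<n. (cmod ((cadj V *\<^sub>v u) $ j))\<^sup>2 * 1) = qform (1\<^sub>m n) u"
    using qform_unitary_diag[OF V u, of "\<lambda>_. 1"] unitaryD[OF V] by simp
  also have "\<dots> = 1" using u u1 by (simp add: qform_def)
  finally show ?thesis by (simp only: mult_1_right of_real_eq_1_iff)
qed

lemma qform_col:
  assumes X: "X \<in> carrier_mat n n" and V: "V \<in> carrier_mat n n" and j: "j < n"
  shows "qform X (col V j) = (cadj V * X * V) $$ (j, j)"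
proof -
  have "(cadj V * X * V) $$ (j, j) = row (cadj V) j \<bullet> col (X * V) j"
    using X V j by (simp add: assoc_mult_mat[of _ n n _ n _ n] del: assoc_mult_mat)
  also have "col (X * V) j = X *\<^sub>v col V j"
    using X V j by (rule col_mult2)
  also have "row (cadj V) j = conjugate (col V j)"
    using V j by (intro eq_vecI) auto
  finally show ?thesis unfolding qform_def by simp
qed

lemma mtrace_add:
  "A \<in> carrier_mat n n \<Longrightarrow> B \<in> carrier_mat n n \<Longrightarrow> mtrace (A + B) = mtrace A + mtrace B"
  unfolding mtrace_def by (simp add: sum.distrib)

lemma mtrace_mult_comm:
  assumes "A \<in> carrier_mat n m" "B \<in> carrier_mat m n"
  shows "mtrace (A * B) = mtrace (B * A)"
proof -
  have "mtrace (A * B) = (\<Sum>i<n. \<Sum>j<m. A $$ (i, j) * B $$ (j, i))"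
    unfolding mtrace_def using assms by (simp add: scalar_prod_def atLeast0LessThan)
  also have "\<dots> = (\<Sum>j<m. \<Sum>i<n. B $$ (j, i) * A $$ (i, j))"
    by (subst sum.swap) (simp add: mult.commute)
  also have "\<dots> = mtrace (B * A)"
    unfolding mtrace_def using assms by (simp add: scalar_prod_def atLeast0LessThan)
  finally show ?thesis .
qed

lemma mtrace_eq_sum_qform:
  assumes U: "unitary n U" and X: "X \<in> carrier_mat n n"
  shows "mtrace X = (\<Sum>k<n. qform X (col U k))"
proof -
  note Uc = unitaryD(1)[OF U]
  have "mtrace X = mtrace (cadj U * X * U)"
    using mtrace_mult_comm[of "cadj U * X" n n U] unitary_cancel_right[OF U X] Uc X
    by (simp add: assoc_mult_mat[of _ n n _ n _ n] del: assoc_mult_mat)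
  also have "\<dots> = (\<Sum>k<n. qform X (col U k))"
    unfolding mtrace_def using Uc X by (simp add: qform_col)
  finally show ?thesis .
qed

lemma qform_unitary_diag_col:
  assumes V: "unitary n V" and j: "j < n"
  shows "qform (V * rdiag n l * cadj V) (col V j) = complex_of_real (l j)"
proof -
  note Vc = unitaryD(1)[OF V]
  have "qform (V * rdiag n l * cadj V) (col V j) = (cadj V * (V * rdiag n l * cadj V) * V) $$ (j, j)"
    using Vc j by (intro qform_col) auto
  also have "cadj V * (V * rdiag n l * cadj V) * V = rdiag n l"
    using unitary_conj_cancel[OF V] by simp
  finally show ?thesis using j by (simp add: mat_diag_def)
qed

lemma unitary_col_norm:
  assumes V: "unitary n V" and j: "j < n"
  shows "conjugate (col V j) \<bullet> col V j = 1"
  using qform_unitary_diag_col[OF V j, of "\<lambda>_. 1"] unitaryD[OF V] j by (simp add: qform_def)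

section \<open>Scalar inequalities\<close>

lemma powr_minus_one_sign:
  fixes x q :: real
  assumes "0 < x"
  shows "0 \<le> q * (x powr q - 1) * (x - 1)"
proof -
  have "0 \<le> q * (x powr q - 1)" if "1 \<le> x"
  proof (cases "0 \<le> q")
    case True
    then show ?thesis using ge_one_powr_ge_zero[OF that True] by simp
  next
    case False
    then show ?thesis using powr_mono[of q 0 x] that by (simp add: mult_nonpos_nonpos)
  qed
  moreover have "q * (x powr q - 1) \<le> 0" if "x \<le> 1"
  proof (cases "0 \<le> q")
    case True
    then show ?thesis using powr_mono'[of 0 q x] that assms by (simp add: mult_nonneg_nonpos)
  next
    case False
    then show ?thesis using powr_mono'[of q 0 x] that assms by (simp add: mult_nonpos_nonneg)
  qed
  ultimately show ?thesis
    by (cases "1 \<le> x") (auto intro: mult_nonneg_nonneg mult_nonpos_nonpos)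
qed

text \<open>By the mean value theorem, \<open>z powr p - (1 + p * (z - 1)) = p * (z - 1) * (\<xi> powr (p - 1) - 1)\<close>
  for some \<open>\<xi>\<close> between \<open>1\<close> and \<open>z\<close>.\<close>

lemma powr_tangent_line_sign:
  fixes z p :: real
  assumes z: "0 < z"
  shows "0 \<le> p * (p - 1) * (z powr p - (1 + p * (z - 1)))"
proof -
  have gap: "0 \<le> p * (p - 1) * (z powr p - (1 + p * (z - 1)))"
    if "0 < a" "a < b" and ends: "z = a \<and> b = 1 \<or> z = b \<and> a = 1" for a b
  proof -
    have "((\<lambda>x. x powr p) has_real_derivative p * x powr (p - 1)) (at x)" if "a \<le> x" "x \<le> b" for x
      using \<open>0 < a\<close> that by (intro has_real_derivative_powr) auto
    from MVT2[OF \<open>a < b\<close> this] obtain \<xi> where \<xi>: "a < \<xi>" "\<xi> < b"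
      and mvt: "b powr p - a powr p = (b - a) * (p * \<xi> powr (p - 1))" by blast
    have "z powr p - (1 + p * (z - 1)) = p * (z - 1) * (\<xi> powr (p - 1) - 1)"
      using mvt ends by (auto simp: algebra_simps)
    moreover have "0 \<le> (p - 1) * (\<xi> powr (p - 1) - 1) * (\<xi> - 1)"
      using powr_minus_one_sign[of \<xi> "p - 1"] \<xi> \<open>0 < a\<close> by simp
    moreover have "0 < (z - 1) * (\<xi> - 1)"
      using ends \<xi> by (auto intro: mult_pos_pos mult_neg_neg)
    ultimately show ?thesis
      by (simp add: zero_le_mult_iff zero_less_mult_iff) (smt (verit) mult_le_0_iff)
  qed
  consider "z = 1" | "1 < z" | "z < 1" by linarith
  then show ?thesis
  proof cases
    case 1
    then show ?thesis by simp
  next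
    case 2
    then show ?thesis using gap[of 1 z] by simp
  next
    case 3
    then show ?thesis using gap[of z 1] z by simp
  qed
qed

lemma powr_ge_tangent_line:
  fixes z p :: real
  assumes "0 < z" "1 \<le> p \<or> p \<le> 0"
  shows "1 + p * (z - 1) \<le> z powr p"
proof (cases "p = 0 \<or> p = 1")
  case False
  then have "0 < p * (p - 1)" using assms(2) by (auto intro: mult_pos_pos mult_neg_neg)
  then show ?thesis
    using powr_tangent_line_sign[OF assms(1), of p] by (simp add: zero_le_mult_iff)
qed (use assms in auto)

lemma powr_le_tangent_line:
  fixes z p :: real
  assumes "0 < z" "0 \<le> p" "p \<le> 1"
  shows "z powr p \<le> 1 + p * (z - 1)"
proof (cases "p = 0 \<or> p = 1")
  case False
  then have neg: "p * (p - 1) < 0" using assms(2,3) by (auto intro: mult_pos_neg)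
  show ?thesis
  proof (rule ccontr)
    assume "\<not> ?thesis"
    then have "0 < z powr p - (1 + p * (z - 1))" by simp
    then have "p * (p - 1) * (z powr p - (1 + p * (z - 1))) < 0"
      by (rule mult_neg_pos[OF neg])
    then show False using powr_tangent_line_sign[OF assms(1), of p] by simp
  qed
qed (use assms in auto)

lemma powr_ge_tangent_line_at:
  fixes t y p :: real
  assumes "0 < t" "0 < y" "1 \<le> p \<or> p \<le> 0"
  shows "y powr p * (1 - p) + p * y powr p / y * t \<le> t powr p"
proof -
  have "y powr p * (1 + p * (t / y - 1)) \<le> y powr p * (t / y) powr p"
    using powr_ge_tangent_line[of "t / y" p] assms by (intro mult_left_mono) auto
  also have "y powr p * (t / y) powr p = t powr p"
    using assms by (simp add: powr_divide)
  finally show ?thesis using assms by (simp add: algebra_simps)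
qed

lemma powr_le_tangent_line_at:
  fixes t y p :: real
  assumes "0 < t" "0 < y" "0 \<le> p" "p \<le> 1"
  shows "t powr p \<le> y powr p * (1 - p) + p * y powr p / y * t"
proof -
  have "y powr p * (t / y) powr p \<le> y powr p * (1 + p * (t / y - 1))"
    using powr_le_tangent_line[of "t / y" p] assms by (intro mult_left_mono) auto
  also have "y powr p * (t / y) powr p = t powr p"
    using assms by (simp add: powr_divide)
  finally show ?thesis using assms by (simp add: algebra_simps)
qed

text \<open>Combine the tangent lines at \<open>t\<close>, evaluated at the end points \<open>1\<close> and \<open>h\<close>, with
  the weights \<open>h - t\<close> and \<open>t - 1\<close>.\<close>

lemma powr_le_chord:
  fixes h p t :: real
  assumes h: "1 < h" and p: "1 \<le> p \<or> p \<le> 0" and t: "1 \<le> t" "t \<le> h"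
  shows "t powr p \<le> (h - h powr p) / (h - 1) + (h powr p - 1) / (h - 1) * t"
proof -
  define T where "T = t powr p"
  define q where "q = p * T / t"
  have "(h - t) * (T * (1 - p) + q * 1) \<le> (h - t) * 1"
    using powr_ge_tangent_line_at[of 1 t p] t p unfolding T_def q_def by (intro mult_left_mono) auto
  moreover have "(t - 1) * (T * (1 - p) + q * h) \<le> (t - 1) * h powr p"
    using powr_ge_tangent_line_at[of h t p] t p h unfolding T_def q_def by (intro mult_left_mono) auto
  moreover have "(h - t) * (T * (1 - p) + q * 1) + (t - 1) * (T * (1 - p) + q * h) = (h - 1) * T"
    unfolding q_def using t by (simp add: field_simps)
  ultimately have "(h - 1) * T \<le> (h - t) + (t - 1) * h powr p"
    by (metis add_mono mult_1_right)
  then have "T \<le> ((h - t) + (t - 1) * h powr p) / (h - 1)" using h by (simp add: field_simps)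
  also have "\<dots> = (h - h powr p) / (h - 1) + (h powr p - 1) / (h - 1) * t"
    using h by (simp add: add_divide_distrib diff_divide_distrib algebra_simps)
  finally show ?thesis unfolding T_def .
qed

lemma chord_le_powr:
  fixes h p t :: real
  assumes h: "1 < h" and p: "0 \<le> p" "p \<le> 1" and t: "1 \<le> t" "t \<le> h"
  shows "(h - h powr p) / (h - 1) + (h powr p - 1) / (h - 1) * t \<le> t powr p"
proof -
  define T where "T = t powr p"
  define q where "q = p * T / t"
  have "(h - t) * 1 \<le> (h - t) * (T * (1 - p) + q * 1)"
    using powr_le_tangent_line_at[of 1 t p] t p unfolding T_def q_def by (intro mult_left_mono) auto
  moreover have "(t - 1) * h powr p \<le> (t - 1) * (T * (1 - p) + q * h)"
    using powr_le_tangent_line_at[of h t p] t p h unfolding T_def q_def by (intro mult_left_mono) auto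
  moreover have "(h - t) * (T * (1 - p) + q * 1) + (t - 1) * (T * (1 - p) + q * h) = (h - 1) * T"
    unfolding q_def using t by (simp add: field_simps)
  ultimately have "(h - t) + (t - 1) * h powr p \<le> (h - 1) * T"
    by (metis add_mono mult_1_right)
  then have "((h - t) + (t - 1) * h powr p) / (h - 1) \<le> T" using h by (simp add: field_simps)
  moreover have "((h - t) + (t - 1) * h powr p) / (h - 1) =
      (h - h powr p) / (h - 1) + (h powr p - 1) / (h - 1) * t"
    using h by (simp add: add_divide_distrib diff_divide_distrib algebra_simps)
  ultimately show ?thesis unfolding T_def by simp
qed

text \<open>\<open>Kant h p * \<mu> powr p = C * (r * \<mu>) powr p\<close> touches the chord line
  \<open>(h - h powr p) / (h - 1) + (h powr p - 1) / (h - 1) * \<mu>\<close> at \<open>\<mu> = 1 / r\<close>.\<close>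

lemma Kant_factorization:
  fixes h p :: real
  assumes h: "1 < h" and p0: "p \<noteq> 0" and p1: "p \<noteq> 1"
  defines "C \<equiv> (h powr p - h) / ((p - 1) * (h - 1))"
    and "r \<equiv> (p - 1) / p * ((h powr p - 1) / (h powr p - h))"
  shows "0 < C" "0 < r" "Kant h p = C * r powr p"
    "C * (1 - p) = (h - h powr p) / (h - 1)" "C * p * r = (h powr p - 1) / (h - 1)"
proof -
  have sign: "0 < (h powr a - h powr b) * (a - b)" if "a \<noteq> b" for a b
    using that powr_less_cancel_iff[OF h, of a b] powr_less_cancel_iff[OF h, of b a]
    by (cases "a < b") (auto intro: mult_pos_pos mult_neg_neg)
  have s1: "0 < (h powr p - h) * (p - 1)" using sign[OF p1] h by simp
  have s0: "0 < (h powr p - 1) * p" using sign[OF p0] h by simp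
  have nz: "h powr p - h \<noteq> 0" "p - 1 \<noteq> 0" "h - 1 \<noteq> 0" using s1 h by auto
  show "0 < C"
    unfolding C_def using s1 h by (auto simp: zero_less_mult_iff zero_less_divide_iff mult_less_0_iff)
  show "0 < r"
    unfolding r_def using s0 s1 by (auto simp: zero_less_mult_iff zero_less_divide_iff mult_less_0_iff)
  show "Kant h p = C * r powr p" unfolding Kant_def C_def r_def using p1 by simp
  have "x / (u * v) * (- u) = - x / v" if "u \<noteq> 0" "v \<noteq> 0" for x u v :: real
    using that by (simp add: field_simps)
  from this[OF nz(2,3), of "h powr p - h"] show "C * (1 - p) = (h - h powr p) / (h - 1)"
    unfolding C_def by simp
  have "x / (u * v) * p * (u / p * (y / x)) = y / v"
    if "u \<noteq> 0" "v \<noteq> 0" "x \<noteq> 0" for x y u v :: real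
    using that p0 by (simp add: field_simps)
  from this[OF nz(2,3,1)] show "C * p * r = (h powr p - 1) / (h - 1)"
    unfolding C_def r_def by simp
qed

lemma Kant_pos:
  assumes "1 < h" "p \<noteq> 0"
  shows "0 < Kant h p"
proof (cases "p = 1")
  case False
  obtain C r where "0 < C" "0 < r" "Kant h p = C * r powr p"
    using Kant_factorization[OF assms False] by blast
  then show ?thesis by simp
qed (simp add: Kant_def)

lemma chord_le_Kant_powr:
  fixes h p \<mu> :: real
  assumes h: "1 < h" and p: "1 < p \<or> p < 0" and \<mu>: "0 < \<mu>"
  shows "(h - h powr p) / (h - 1) + (h powr p - 1) / (h - 1) * \<mu> \<le> Kant h p * \<mu> powr p"
proof -
  define C where "C = (h powr p - h) / ((p - 1) * (h - 1))"
  define r where "r = (p - 1) / p * ((h powr p - 1) / (h powr p - h))"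
  have p01: "p \<noteq> 0" "p \<noteq> 1" using p by auto
  note K = Kant_factorization[OF h p01, folded C_def r_def]
  have "C * (1 + p * (r * \<mu> - 1)) \<le> C * (r * \<mu>) powr p"
    using powr_ge_tangent_line[of "r * \<mu>" p] K \<mu> p by (intro mult_left_mono) auto
  also have "C * (r * \<mu>) powr p = Kant h p * \<mu> powr p"
    using K \<mu> by (simp add: powr_mult)
  also have "C * (1 + p * (r * \<mu> - 1)) = C * (1 - p) + C * p * r * \<mu>"
    by (simp add: algebra_simps)
  finally show ?thesis using K by simp
qed

lemma Kant_powr_le_chord:
  fixes h p \<mu> :: real
  assumes h: "1 < h" and p: "0 < p" "p < 1" and \<mu>: "0 < \<mu>"
  shows "Kant h p * \<mu> powr p \<le> (h - h powr p) / (h - 1) + (h powr p - 1) / (h - 1) * \<mu>"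
proof -
  define C where "C = (h powr p - h) / ((p - 1) * (h - 1))"
  define r where "r = (p - 1) / p * ((h powr p - 1) / (h powr p - h))"
  have p01: "p \<noteq> 0" "p \<noteq> 1" using p by auto
  note K = Kant_factorization[OF h p01, folded C_def r_def]
  have "C * (r * \<mu>) powr p \<le> C * (1 + p * (r * \<mu> - 1))"
    using powr_le_tangent_line[of "r * \<mu>" p] K \<mu> p by (intro mult_left_mono) auto
  also have "C * (r * \<mu>) powr p = Kant h p * \<mu> powr p"
    using K \<mu> by (simp add: powr_mult)
  also have "C * (1 + p * (r * \<mu> - 1)) = C * (1 - p) + C * p * r * \<mu>"
    by (simp add: algebra_simps)
  finally show ?thesis using K by simp
qed

lemma sum_affine_weights:
  fixes w t :: "'a \<Rightarrow> real"
  assumes "(\<Sum>x\<in>I. w x) = 1"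
  shows "(\<Sum>x\<in>I. w x * (\<alpha> + \<beta> * t x)) = \<alpha> + \<beta> * (\<Sum>x\<in>I. w x * t x)"
proof -
  have "(\<Sum>x\<in>I. w x * (\<alpha> + \<beta> * t x)) = \<alpha> * (\<Sum>x\<in>I. w x) + \<beta> * (\<Sum>x\<in>I. w x * t x)"
    by (simp add: sum.distrib sum_distrib_left distrib_left mult.commute mult.left_commute)
  then show ?thesis using assms by simp
qed

text \<open>In both cases one bound is Jensen's inequality (the tangent at the mean); the other
  compares the function with its chord over \<open>[1, h]\<close> and the chord with \<open>Kant h p * \<mu> powr p\<close>.\<close>

lemma weighted_power_mean_Kant_convex:
  fixes w t :: "'a \<Rightarrow> real" and h p :: real
  assumes w: "\<And>x. x \<in> I \<Longrightarrow> 0 \<le> w x" and w1: "(\<Sum>x\<in>I. w x) = 1"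
    and t: "\<And>x. x \<in> I \<Longrightarrow> 1 \<le> t x \<and> t x \<le> h" and h: "1 < h" and p: "1 \<le> p \<or> p < 0"
  defines "\<mu> \<equiv> \<Sum>x\<in>I. w x * t x" and "\<nu> \<equiv> \<Sum>x\<in>I. w x * t x powr p"
  shows "\<mu> powr p \<le> \<nu> \<and> \<nu> \<le> Kant h p * \<mu> powr p"
proof -
  note affine = sum_affine_weights[OF w1, of _ _ t, folded \<mu>_def]
  have "(\<Sum>x\<in>I. w x * 1) \<le> \<mu>"
    unfolding \<mu>_def using w t by (intro sum_mono mult_left_mono) auto
  then have \<mu>: "1 \<le> \<mu>" using w1 by simp
  have tpos: "x \<in> I \<Longrightarrow> 0 < t x" for x using t[of x] by auto
  have "(\<Sum>x\<in>I. w x * (\<mu> powr p * (1 - p) + p * \<mu> powr p / \<mu> * t x)) \<le> \<nu>"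
    unfolding \<nu>_def using w powr_ge_tangent_line_at[of "t _" \<mu> p] tpos \<mu> p
    by (intro sum_mono mult_left_mono) auto
  then have jensen: "\<mu> powr p \<le> \<nu>"
    unfolding affine using \<mu> by (simp add: algebra_simps)
  have "\<nu> \<le> (\<Sum>x\<in>I. w x * ((h - h powr p) / (h - 1) + (h powr p - 1) / (h - 1) * t x))"
    unfolding \<nu>_def using w powr_le_chord[OF h, of p "t _"] t p
    by (intro sum_mono mult_left_mono) auto
  then have chord: "\<nu> \<le> (h - h powr p) / (h - 1) + (h powr p - 1) / (h - 1) * \<mu>"
    unfolding affine .
  show ?thesis
  proof (cases "p = 1")
    case True
    then have "\<nu> = \<mu>" unfolding \<nu>_def \<mu>_def using tpos by (auto intro!: sum.cong simp: less_imp_le)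
    then show ?thesis using True \<mu> by (simp add: Kant_def)
  next
    case False
    then have "1 < p \<or> p < 0" using p by auto
    then show ?thesis using jensen chord chord_le_Kant_powr[OF h _, of p \<mu>] \<mu> by simp
  qed
qed

lemma weighted_power_mean_Kant_concave:
  fixes w t :: "'a \<Rightarrow> real" and h p :: real
  assumes w: "\<And>x. x \<in> I \<Longrightarrow> 0 \<le> w x" and w1: "(\<Sum>x\<in>I. w x) = 1"
    and t: "\<And>x. x \<in> I \<Longrightarrow> 1 \<le> t x \<and> t x \<le> h" and h: "1 < h" and p: "0 < p" "p \<le> 1"
  defines "\<mu> \<equiv> \<Sum>x\<in>I. w x * t x" and "\<nu> \<equiv> \<Sum>x\<in>I. w x * t x powr p"
  shows "Kant h p * \<mu> powr p \<le> \<nu> \<and> \<nu> \<le> \<mu> powr p"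
proof -
  note affine = sum_affine_weights[OF w1, of _ _ t, folded \<mu>_def]
  have "(\<Sum>x\<in>I. w x * 1) \<le> \<mu>"
    unfolding \<mu>_def using w t by (intro sum_mono mult_left_mono) auto
  then have \<mu>: "1 \<le> \<mu>" using w1 by simp
  have tpos: "x \<in> I \<Longrightarrow> 0 < t x" for x using t[of x] by auto
  have "\<nu> \<le> (\<Sum>x\<in>I. w x * (\<mu> powr p * (1 - p) + p * \<mu> powr p / \<mu> * t x))"
    unfolding \<nu>_def using w powr_le_tangent_line_at[of "t _" \<mu> p] tpos \<mu> p
    by (intro sum_mono mult_left_mono) auto
  then have jensen: "\<nu> \<le> \<mu> powr p"
    unfolding affine using \<mu> by (simp add: algebra_simps)
  have "(\<Sum>x\<in>I. w x * ((h - h powr p) / (h - 1) + (h powr p - 1) / (h - 1) * t x)) \<le> \<nu>"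
    unfolding \<nu>_def using w chord_le_powr[OF h, of p "t _"] t p
    by (intro sum_mono mult_left_mono) auto
  then have chord: "(h - h powr p) / (h - 1) + (h powr p - 1) / (h - 1) * \<mu> \<le> \<nu>"
    unfolding affine .
  show ?thesis
  proof (cases "p = 1")
    case True
    then have "\<nu> = \<mu>" unfolding \<nu>_def \<mu>_def using tpos by (auto intro!: sum.cong simp: less_imp_le)
    then show ?thesis using True \<mu> by (simp add: Kant_def)
  next
    case False
    then show ?thesis using jensen chord Kant_powr_le_chord[OF h, of p \<mu>] \<mu> p by simp
  qed
qed

lemma weighted_power_mean_Kant_scaled:
  fixes w t :: "'a \<Rightarrow> real" and a b p N :: real
  assumes w: "\<And>x. x \<in> I \<Longrightarrow> 0 \<le> w x" and wN: "(\<Sum>x\<in>I. w x) = N" and N: "0 < N"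
    and t: "\<And>x. x \<in> I \<Longrightarrow> a \<le> t x \<and> t x \<le> b" and a: "0 < a" and ab: "a < b"
  defines "m \<equiv> (\<Sum>x\<in>I. w x * t x) / N" and "s \<equiv> (\<Sum>x\<in>I. w x * t x powr p) / N"
    and "K \<equiv> Kant (b / a) p"
  shows "0 < m"
    and "1 \<le> p \<or> p < 0 \<Longrightarrow> m powr p \<le> s \<and> s \<le> K * m powr p"
    and "0 < p \<and> p \<le> 1 \<Longrightarrow> K * m powr p \<le> s \<and> s \<le> m powr p"
proof -
  have "N * a = (\<Sum>x\<in>I. w x * a)"
    using wN by (simp flip: sum_distrib_right)
  also have "\<dots> \<le> (\<Sum>x\<in>I. w x * t x)"
    using w t by (intro sum_mono mult_left_mono) auto
  finally show m: "0 < m"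
    unfolding m_def using N a by (smt (verit) divide_pos_pos mult_pos_pos)
  define w' where "w' x = w x / N" for x
  define t' where "t' x = t x / a" for x
  have w': "x \<in> I \<Longrightarrow> 0 \<le> w' x" for x unfolding w'_def using w N by simp
  have w'1: "(\<Sum>x\<in>I. w' x) = 1" unfolding w'_def using wN N by (simp flip: sum_divide_distrib)
  have t': "x \<in> I \<Longrightarrow> 1 \<le> t' x \<and> t' x \<le> b / a" for x
    unfolding t'_def using t a by (auto simp: divide_simps)
  have h: "1 < b / a" using a ab by simp
  have mean: "(\<Sum>x\<in>I. w' x * t' x) = m / a"
    unfolding m_def w'_def t'_def by (simp add: sum_divide_distrib)
  have pmean: "(\<Sum>x\<in>I. w' x * t' x powr p) = s / a powr p"
    unfolding s_def w'_def t'_def using t a by (simp add: sum_divide_distrib powr_divide)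
  have ap: "0 < a powr p" using a by simp
  show "1 \<le> p \<or> p < 0 \<Longrightarrow> m powr p \<le> s \<and> s \<le> K * m powr p"
    using weighted_power_mean_Kant_convex[where I = I and w = w' and t = t' and p = p, OF w' w'1 t' h]
    unfolding mean pmean K_def powr_divide using ap by (simp add: divide_simps)
  show "0 < p \<and> p \<le> 1 \<Longrightarrow> K * m powr p \<le> s \<and> s \<le> m powr p"
    using weighted_power_mean_Kant_concave[where I = I and w = w' and t = t' and p = p, OF w' w'1 t' h]
    unfolding mean pmean K_def powr_divide using ap by (simp add: divide_simps)
qed

lemma powr_root_sandwich:
  fixes m s K p :: real
  assumes m: "0 < m" and K: "0 < K"
  shows "0 < p \<Longrightarrow> m powr p \<le> s \<Longrightarrow> s \<le> K * m powr p \<Longrightarrow>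
      0 < s \<and> m \<le> s powr (1 / p) \<and> s powr (1 / p) \<le> K powr (1 / p) * m"
    and "p < 0 \<Longrightarrow> m powr p \<le> s \<Longrightarrow> s \<le> K * m powr p \<Longrightarrow>
      0 < s \<and> K powr (1 / p) * m \<le> s powr (1 / p) \<and> s powr (1 / p) \<le> m"
    and "0 < p \<Longrightarrow> K * m powr p \<le> s \<Longrightarrow> s \<le> m powr p \<Longrightarrow>
      0 < s \<and> K powr (1 / p) * m \<le> s powr (1 / p) \<and> s powr (1 / p) \<le> m"
proof -
  have root: "(K * m powr p) powr (1 / p) = K powr (1 / p) * m" "(m powr p) powr (1 / p) = m"
    if "p \<noteq> 0"
    using that m K by (simp_all add: powr_mult powr_powr)
  have mp: "0 < m powr p" "0 < K * m powr p" using m K by simp_all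
  show "0 < s \<and> m \<le> s powr (1 / p) \<and> s powr (1 / p) \<le> K powr (1 / p) * m"
    if "0 < p" "m powr p \<le> s" "s \<le> K * m powr p"
  proof -
    have "0 < s" using mp that by linarith
    moreover have "(m powr p) powr (1 / p) \<le> s powr (1 / p)"
      using that mp by (intro powr_mono2) auto
    moreover have "s powr (1 / p) \<le> (K * m powr p) powr (1 / p)"
      using that \<open>0 < s\<close> by (intro powr_mono2) auto
    ultimately show ?thesis using root that by simp
  qed
  show "0 < s \<and> K powr (1 / p) * m \<le> s powr (1 / p) \<and> s powr (1 / p) \<le> m"
    if "p < 0" "m powr p \<le> s" "s \<le> K * m powr p"
  proof -
    have "0 < s" using mp that by linarith
    moreover have "(K * m powr p) powr (1 / p) \<le> s powr (1 / p)"
      using that \<open>0 < s\<close> by (intro powr_mono2') auto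
    moreover have "s powr (1 / p) \<le> (m powr p) powr (1 / p)"
      using that mp by (intro powr_mono2') auto
    ultimately show ?thesis using root that by simp
  qed
  show "0 < s \<and> K powr (1 / p) * m \<le> s powr (1 / p) \<and> s powr (1 / p) \<le> m"
    if "0 < p" "K * m powr p \<le> s" "s \<le> m powr p"
  proof -
    have "0 < s" using mp that by linarith
    moreover have "(K * m powr p) powr (1 / p) \<le> s powr (1 / p)"
      using that mp by (intro powr_mono2) auto
    moreover have "s powr (1 / p) \<le> (m powr p) powr (1 / p)"
      using that \<open>0 < s\<close> by (intro powr_mono2) auto
    ultimately show ?thesis using root that by simp
  qed
qed

lemma weighted_power_mean_root_Kant:
  fixes w t :: "'a \<Rightarrow> real" and a b p N :: real
  assumes w: "\<And>x. x \<in> I \<Longrightarrow> 0 \<le> w x" and wN: "(\<Sum>x\<in>I. w x) = N" and N: "0 < N"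
    and t: "\<And>x. x \<in> I \<Longrightarrow> a \<le> t x \<and> t x \<le> b" and a: "0 < a" and ab: "a < b" and p0: "p \<noteq> 0"
  defines "S \<equiv> \<Sum>x\<in>I. w x * t x powr p"
    and "L \<equiv> N powr (1 / p) / N * (\<Sum>x\<in>I. w x * t x)"
    and "\<kappa> \<equiv> Kant (b / a) p powr (1 / p)"
  shows "1 \<le> p \<Longrightarrow> L \<le> S powr (1 / p) \<and> S powr (1 / p) \<le> \<kappa> * L"
    and "p \<le> 1 \<Longrightarrow> \<kappa> * L \<le> S powr (1 / p) \<and> S powr (1 / p) \<le> L"
proof -
  define m where "m = (\<Sum>x\<in>I. w x * t x) / N"
  define s where "s = S / N"
  have m: "0 < m"
    unfolding m_def using weighted_power_mean_Kant_scaled(1)[OF w wN N t a ab] .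
  note scaled = weighted_power_mean_Kant_scaled(2,3)[where I = I and w = w and t = t and p = p,
      OF w wN N t a ab, folded m_def, folded S_def, folded s_def]
  have K: "0 < Kant (b / a) p" using Kant_pos[of "b / a" p] a ab p0 by simp
  note root = powr_root_sandwich[OF m K]
  have S: "S powr (1 / p) = N powr (1 / p) * s powr (1 / p)" if "0 \<le> s"
    unfolding s_def using N that s_def by (simp add: powr_mult[symmetric])
  have L: "L = N powr (1 / p) * m" unfolding L_def m_def by simp
  have Npos: "0 < N powr (1 / p)" using N by simp
  show "1 \<le> p \<Longrightarrow> L \<le> S powr (1 / p) \<and> S powr (1 / p) \<le> \<kappa> * L"
  proof -
    assume p: "1 \<le> p"
    have "0 < s \<and> m \<le> s powr (1 / p) \<and> s powr (1 / p) \<le> Kant (b / a) p powr (1 / p) * m"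
      using root(1)[of p s] scaled(1) p by simp
    then show ?thesis
      using S Npos unfolding L \<kappa>_def by (simp add: mult.left_commute)
  qed
  show "p \<le> 1 \<Longrightarrow> \<kappa> * L \<le> S powr (1 / p) \<and> S powr (1 / p) \<le> L"
  proof -
    assume p: "p \<le> 1"
    have "0 < s \<and> Kant (b / a) p powr (1 / p) * m \<le> s powr (1 / p) \<and> s powr (1 / p) \<le> m"
      using root(2,3)[of p s] scaled p p0 by (cases "0 < p") auto
    then show ?thesis
      using S Npos unfolding L \<kappa>_def by (simp add: mult.left_commute)
  qed
qed

lemma loewner_le_add:
  assumes AB: "loewner_le d A B" and CD: "loewner_le d C D"
  shows "loewner_le d (A + C) (B + D)"
proof -
  have hA: "hermitian d A" and hB: "hermitian d B" and hC: "hermitian d C" and hD: "hermitian d D"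
    and psd1: "pos_semidef d (B - A)" and psd2: "pos_semidef d (D - C)"
    using AB CD unfolding loewner_le_def by auto
  have A: "A \<in> carrier_mat d d" and B: "B \<in> carrier_mat d d"
    and C: "C \<in> carrier_mat d d" and D: "D \<in> carrier_mat d d"
    using hA hB hC hD unfolding hermitian_def by auto
  have herm: "hermitian d (X + Y)" if "hermitian d X" "hermitian d Y" for X Y
    using that unfolding hermitian_def by (auto simp: cadj_add[of _ d d])
  have diff: "B + D - (A + C) = (B - A) + (D - C)"
    using A B C D by (intro eq_matI) auto
  have "pos_semidef d (B + D - (A + C))"
    unfolding pos_semidef_def
  proof
    show "hermitian d (B + D - (A + C))"
      unfolding diff using herm psd1 psd2 unfolding pos_semidef_def by blast
    show "\<forall>v\<in>carrier_vec d. 0 \<le> Re (qform (B + D - (A + C)) v)"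
    proof
      fix v :: "complex vec" assume v: "v \<in> carrier_vec d"
      have "qform (B + D - (A + C)) v = qform (B - A) v + qform (D - C) v"
        unfolding diff using A B C D v by (intro qform_add) auto
      then show "0 \<le> Re (qform (B + D - (A + C)) v)"
        using psd1 psd2 v unfolding pos_semidef_def by simp
    qed
  qed
  then show ?thesis
    unfolding loewner_le_def using herm[OF hA hC] herm[OF hB hD] by blast
qed

lemma loewner_le_scalar_qform:
  fixes c :: real
  assumes v: "v \<in> carrier_vec d"
  shows "loewner_le d (c \<cdot>\<^sub>m 1\<^sub>m d) X \<Longrightarrow> c * Re (conjugate v \<bullet> v) \<le> Re (qform X v)"
    and "loewner_le d X (c \<cdot>\<^sub>m 1\<^sub>m d) \<Longrightarrow> Re (qform X v) \<le> c * Re (conjugate v \<bullet> v)"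
proof -
  have I: "complex_of_real c \<cdot>\<^sub>m 1\<^sub>m d \<in> carrier_mat d d" by simp
  show "c * Re (conjugate v \<bullet> v) \<le> Re (qform X v)" if "loewner_le d (c \<cdot>\<^sub>m 1\<^sub>m d) X"
  proof -
    have X: "X \<in> carrier_mat d d" using that unfolding loewner_le_def hermitian_def by simp
    have "0 \<le> Re (qform (X - complex_of_real c \<cdot>\<^sub>m 1\<^sub>m d) v)"
      using that v unfolding loewner_le_def pos_semidef_def by blast
    then show ?thesis using qform_minus[OF X I v] qform_smult_one[OF v] by simp
  qed
  show "Re (qform X v) \<le> c * Re (conjugate v \<bullet> v)" if "loewner_le d X (c \<cdot>\<^sub>m 1\<^sub>m d)"
  proof -
    have X: "X \<in> carrier_mat d d" using that unfolding loewner_le_def hermitian_def by simp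
    have "0 \<le> Re (qform (complex_of_real c \<cdot>\<^sub>m 1\<^sub>m d - X) v)"
      using that v unfolding loewner_le_def pos_semidef_def by blast
    then show ?thesis using qform_minus[OF I X v] qform_smult_one[OF v] by simp
  qed
qed

lemma loewner_bounded_spectral:
  fixes a b :: real
  assumes lo: "loewner_le d (a \<cdot>\<^sub>m 1\<^sub>m d) X" and hi: "loewner_le d X (b \<cdot>\<^sub>m 1\<^sub>m d)"
  shows "\<exists>V lam. unitary d V \<and> X = V * rdiag d lam * cadj V \<and> (\<forall>j<d. a \<le> lam j \<and> lam j \<le> b)"
proof -
  obtain V lam where V: "unitary d V" and XV: "X = V * rdiag d lam * cadj V"
    using hermitian_spectral[of d X] lo unfolding loewner_le_def by blast
  have "a \<le> lam j \<and> lam j \<le> b" if j: "j < d" for j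
  proof -
    have v: "col V j \<in> carrier_vec d" using unitaryD(1)[OF V] j by simp
    have "qform X (col V j) = complex_of_real (lam j)"
      unfolding XV using qform_unitary_diag_col[OF V j] .
    then show ?thesis
      using loewner_le_scalar_qform(1)[OF v lo] loewner_le_scalar_qform(2)[OF v hi]
        unitary_col_norm[OF V j] by simp
  qed
  then show ?thesis using V XV by blast
qed

lemma hermitian_mat_powr:
  assumes "hermitian d X"
  shows "hermitian d (mat_powr d X p)"
proof -
  obtain V lam where "unitary d V" "X = V * rdiag d lam * cadj V"
    using hermitian_spectral[OF assms] by blast
  then show ?thesis using mat_powr_spectral hermitian_unitary_conj by metis
qed

lemma hermitian_msum:
  assumes "\<And>i. i < k \<Longrightarrow> hermitian d (f i)"
  shows "hermitian d (msum d f k)"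
  using assms
proof (induction k)
  case 0
  then show ?case unfolding hermitian_def by (auto intro!: eq_matI)
next
  case (Suc k)
  then have "hermitian d (msum d f k)" "hermitian d (f k)" by auto
  then show ?case unfolding hermitian_def by (simp add: cadj_add[of _ d d])
qed

section \<open>Power sums of matrices with spectra in \<open>[a, b]\<close>\<close>

lemma loewner_bounded_spectral_family:
  fixes X :: "nat \<Rightarrow> complex mat" and a b :: real
  assumes X: "\<And>i. i < n \<Longrightarrow> loewner_le d (a \<cdot>\<^sub>m 1\<^sub>m d) (X i) \<and> loewner_le d (X i) (b \<cdot>\<^sub>m 1\<^sub>m d)"
  obtains V lam where "\<And>i. i < n \<Longrightarrow> unitary d (V i)"
    and "\<And>i. i < n \<Longrightarrow> X i = V i * rdiag d (lam i) * cadj (V i)"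
    and "\<And>i j. i < n \<Longrightarrow> j < d \<Longrightarrow> a \<le> lam i j \<and> lam i j \<le> b"
proof -
  have "\<forall>i. \<exists>V lam. i < n \<longrightarrow>
      unitary d V \<and> X i = V * rdiag d lam * cadj V \<and> (\<forall>j<d. a \<le> lam j \<and> lam j \<le> b)"
  proof
    fix i
    show "\<exists>V lam. i < n \<longrightarrow>
      unitary d V \<and> X i = V * rdiag d lam * cadj V \<and> (\<forall>j<d. a \<le> lam j \<and> lam j \<le> b)"
    proof (cases "i < n")
      case True
      then show ?thesis
        using loewner_bounded_spectral[OF conjunct1[OF X[OF True]] conjunct2[OF X[OF True]]] by simp
    qed simp
  qed
  from choice[OF this] obtain V where "\<forall>i. \<exists>lam. i < n \<longrightarrow>
      unitary d (V i) \<and> X i = V i * rdiag d lam * cadj (V i) \<and> (\<forall>j<d. a \<le> lam j \<and> lam j \<le> b)" ..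
  from choice[OF this] obtain lam where "\<forall>i. i < n \<longrightarrow>
      unitary d (V i) \<and> X i = V i * rdiag d (lam i) * cadj (V i) \<and> (\<forall>j<d. a \<le> lam i j \<and> lam i j \<le> b)" ..
  then show thesis
    by (intro that[of V lam]) auto
qed

text \<open>At a unit vector \<open>u\<close>, all quadratic forms \<open>u\<^sup>* X\<^sub>i u\<close> and \<open>u\<^sup>* X\<^sub>i\<^sup>p u\<close> are weighted
  sums over the eigenvalues \<open>\<lambda>\<^sub>i\<^sub>j \<in> [a, b]\<close> with the same weights, of total mass \<open>n\<close>.\<close>

lemma qform_power_sum_root_Kant:
  fixes X :: "nat \<Rightarrow> complex mat" and a b p :: real
  assumes n: "1 \<le> n" and a: "0 < a" and ab: "a < b" and p0: "p \<noteq> 0"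
    and X: "\<And>i. i < n \<Longrightarrow> loewner_le d (a \<cdot>\<^sub>m 1\<^sub>m d) (X i) \<and> loewner_le d (X i) (b \<cdot>\<^sub>m 1\<^sub>m d)"
    and u: "u \<in> carrier_vec d" and u1: "conjugate u \<bullet> u = 1"
  defines "s \<equiv> Re (qform (msum d (\<lambda>i. mat_powr d (X i) p) n) u)"
    and "L \<equiv> real n powr (1 / p) / real n * (\<Sum>i<n. Re (qform (X i) u))"
    and "\<kappa> \<equiv> Kant (b / a) p powr (1 / p)"
  shows "1 \<le> p \<Longrightarrow> L \<le> s powr (1 / p) \<and> s powr (1 / p) \<le> \<kappa> * L"
    and "p \<le> 1 \<Longrightarrow> \<kappa> * L \<le> s powr (1 / p) \<and> s powr (1 / p) \<le> L"
proof -
  obtain V lam where V: "\<And>i. i < n \<Longrightarrow> unitary d (V i)"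
    and XV: "\<And>i. i < n \<Longrightarrow> X i = V i * rdiag d (lam i) * cadj (V i)"
    and lam: "\<And>i j. i < n \<Longrightarrow> j < d \<Longrightarrow> a \<le> lam i j \<and> lam i j \<le> b"
    using loewner_bounded_spectral_family[where n = n and d = d and X = X and a = a and b = b, OF X]
    by blast
  define I where "I = {..<n} \<times> {..<d}"
  define w where "w = (\<lambda>(i, j). (cmod ((cadj (V i) *\<^sub>v u) $ j))\<^sup>2)"
  define t where "t = (\<lambda>(i, j). lam i j)"
  have sum_I: "(\<Sum>x\<in>I. f x) = (\<Sum>i<n. \<Sum>j<d. f (i, j))" for f :: "nat \<times> nat \<Rightarrow> real"
    unfolding I_def by (simp add: sum.cartesian_product)
  have qform_fun: "Re (qform (V i * rdiag d (\<lambda>j. g (lam i j)) * cadj (V i)) u) =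
      (\<Sum>j<d. w (i, j) * g (t (i, j)))" if "i < n" for i g
    using qform_unitary_diag[OF V[OF that] u] by (simp add: w_def t_def)
  have P: "mat_powr d (X i) p = V i * rdiag d (\<lambda>j. lam i j powr p) * cadj (V i)" if "i < n" for i
    using mat_powr_spectral[OF V XV, OF that that] .
  have "s = (\<Sum>i<n. Re (qform (mat_powr d (X i) p) u))"
    unfolding s_def using unitaryD(1)[OF V] u by (simp add: qform_msum P)
  also have "\<dots> = (\<Sum>x\<in>I. w x * t x powr p)"
    unfolding sum_I using qform_fun[where g = "\<lambda>x. x powr p"] by (simp add: P)
  finally have s: "s = (\<Sum>x\<in>I. w x * t x powr p)" .
  have "(\<Sum>i<n. Re (qform (X i) u)) = (\<Sum>x\<in>I. w x * t x)"
    unfolding sum_I using qform_fun[where g = "\<lambda>x. x"] by (simp add: XV)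
  then have L: "L = real n powr (1 / p) / real n * (\<Sum>x\<in>I. w x * t x)"
    unfolding L_def by simp
  have "(\<Sum>x\<in>I. w x) = (\<Sum>i<n. 1)"
    unfolding sum_I w_def using unitary_weights_sum[OF V u u1] by simp
  then have wn: "(\<Sum>x\<in>I. w x) = real n" by simp
  have w: "\<And>x. x \<in> I \<Longrightarrow> 0 \<le> w x" by (auto simp: w_def)
  have t: "\<And>x. x \<in> I \<Longrightarrow> a \<le> t x \<and> t x \<le> b" using lam by (auto simp: I_def t_def)
  note bounds = weighted_power_mean_root_Kant[where I = I and w = w and t = t and N = "real n",
      OF w wn _ t a ab p0]
  show "1 \<le> p \<Longrightarrow> L \<le> s powr (1 / p) \<and> s powr (1 / p) \<le> \<kappa> * L"
    using bounds(1) n unfolding s L \<kappa>_def by simp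
  show "p \<le> 1 \<Longrightarrow> \<kappa> * L \<le> s powr (1 / p) \<and> s powr (1 / p) \<le> L"
    using bounds(2) n unfolding s L \<kappa>_def by simp
qed

text \<open>With \<open>u\<^sub>k\<close> the columns of a unitary diagonalising \<open>S = \<Sum>\<^sub>i X\<^sub>i powr p\<close>, the trace
  of \<open>S powr (1/p)\<close> is \<open>\<Sum>\<^sub>k (u\<^sub>k\<^sup>* S u\<^sub>k) powr (1/p)\<close>, and each summand is estimated by the
  previous lemma.\<close>

lemma trace_power_sum_root_Kant:
  fixes X :: "nat \<Rightarrow> complex mat" and a b p :: real
  assumes n: "1 \<le> n" and a: "0 < a" and ab: "a < b" and p0: "p \<noteq> 0"
    and X: "\<And>i. i < n \<Longrightarrow> loewner_le d (a \<cdot>\<^sub>m 1\<^sub>m d) (X i) \<and> loewner_le d (X i) (b \<cdot>\<^sub>m 1\<^sub>m d)"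
  defines "T \<equiv> Re (mtrace (mat_powr d (msum d (\<lambda>i. mat_powr d (X i) p) n) (1 / p)))"
    and "L \<equiv> real n powr (1 / p) / real n * (\<Sum>i<n. Re (mtrace (X i)))"
    and "\<kappa> \<equiv> Kant (b / a) p powr (1 / p)"
  shows "1 \<le> p \<Longrightarrow> L \<le> T \<and> T \<le> \<kappa> * L"
    and "p \<le> 1 \<Longrightarrow> \<kappa> * L \<le> T \<and> T \<le> L"
proof -
  define S where "S = msum d (\<lambda>i. mat_powr d (X i) p) n"
  have Xh: "i < n \<Longrightarrow> hermitian d (X i)" for i
    using X unfolding loewner_le_def by blast
  then have Xc: "i < n \<Longrightarrow> X i \<in> carrier_mat d d" for i
    unfolding hermitian_def by blast
  have "hermitian d S"
    unfolding S_def using Xh by (intro hermitian_msum hermitian_mat_powr)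
  then obtain U \<sigma> where U: "unitary d U" and SU: "S = U * rdiag d \<sigma> * cadj U"
    using hermitian_spectral by blast
  have u: "col U k \<in> carrier_vec d" "conjugate (col U k) \<bullet> col U k = 1" if "k < d" for k
    using unitaryD(1)[OF U] unitary_col_norm[OF U that] that by auto
  have \<sigma>: "\<sigma> k = Re (qform S (col U k))" if "k < d" for k
    unfolding SU qform_unitary_diag_col[OF U that] by simp
  have "mtrace (mat_powr d S (1 / p)) = (\<Sum>k<d. qform (mat_powr d S (1 / p)) (col U k))"
    unfolding mat_powr_spectral[OF U SU] using unitaryD(1)[OF U] by (intro mtrace_eq_sum_qform[OF U]) simp
  then have T: "T = (\<Sum>k<d. Re (qform S (col U k)) powr (1 / p))"
    unfolding T_def S_def[symmetric] using \<sigma>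
    by (simp add: mat_powr_spectral[OF U SU] qform_unitary_diag_col[OF U])
  define Lk where "Lk k = real n powr (1 / p) / real n * (\<Sum>i<n. Re (qform (X i) (col U k)))" for k
  have "(\<Sum>i<n. Re (mtrace (X i))) = (\<Sum>i<n. \<Sum>k<d. Re (qform (X i) (col U k)))"
    using mtrace_eq_sum_qform[OF U Xc] by simp
  also have "\<dots> = (\<Sum>k<d. \<Sum>i<n. Re (qform (X i) (col U k)))"
    by (rule sum.swap)
  finally have L: "L = (\<Sum>k<d. Lk k)"
    unfolding L_def Lk_def by (simp add: sum_distrib_left)
  have bounds:
    "1 \<le> p \<Longrightarrow> Lk k \<le> Re (qform S (col U k)) powr (1 / p) \<and> Re (qform S (col U k)) powr (1 / p) \<le> \<kappa> * Lk k"
    "p \<le> 1 \<Longrightarrow> \<kappa> * Lk k \<le> Re (qform S (col U k)) powr (1 / p) \<and> Re (qform S (col U k)) powr (1 / p) \<le> Lk k"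
    if "k < d" for k
    using qform_power_sum_root_Kant[where X = X and u = "col U k", OF n a ab p0 X u[OF that]]
    unfolding S_def Lk_def \<kappa>_def by simp_all
  show "1 \<le> p \<Longrightarrow> L \<le> T \<and> T \<le> \<kappa> * L"
    using bounds(1) unfolding T L by (auto intro!: sum_mono simp: sum_distrib_left)
  show "p \<le> 1 \<Longrightarrow> \<kappa> * L \<le> T \<and> T \<le> L"
    using bounds(2) unfolding T L by (auto intro!: sum_mono simp: sum_distrib_left)
qed

lemma two_sided_bounds_add:
  fixes l u :: real
  assumes l: "0 < l" and u: "0 < u" and L: "Lab = La + Lb"
    and "l * La \<le> Ta" "Ta \<le> u * La" "l * Lb \<le> Tb" "Tb \<le> u * Lb" "l * Lab \<le> Tab" "Tab \<le> u * Lab"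
  shows "l / u * (Ta + Tb) \<le> Tab \<and> Tab \<le> u / l * (Ta + Tb)"
proof
  have "Ta / u \<le> La" "Tb / u \<le> Lb" using assms by (simp_all add: field_simps)
  then have "l * ((Ta + Tb) / u) \<le> l * Lab"
    unfolding L using l by (intro mult_left_mono) (simp_all add: add_divide_distrib)
  then show "l / u * (Ta + Tb) \<le> Tab" using assms by simp
  have "La \<le> Ta / l" "Lb \<le> Tb / l" using assms by (simp_all add: field_simps)
  then have "u * Lab \<le> u * ((Ta + Tb) / l)"
    unfolding L using u by (intro mult_left_mono) (simp_all add: add_divide_distrib)
  then show "Tab \<le> u / l * (Ta + Tb)" using assms by simp
qed

lemma loewner_bounds_add:
  fixes a b :: real
  assumes "loewner_le d (a \<cdot>\<^sub>m 1\<^sub>m d) X \<and> loewner_le d X (b \<cdot>\<^sub>m 1\<^sub>m d)"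
    and "loewner_le d (a \<cdot>\<^sub>m 1\<^sub>m d) Y \<and> loewner_le d Y (b \<cdot>\<^sub>m 1\<^sub>m d)"
  shows "loewner_le d ((2 * a) \<cdot>\<^sub>m 1\<^sub>m d) (X + Y) \<and> loewner_le d (X + Y) ((2 * b) \<cdot>\<^sub>m 1\<^sub>m d)"
proof -
  have "complex_of_real (2 * c) \<cdot>\<^sub>m 1\<^sub>m d = complex_of_real c \<cdot>\<^sub>m 1\<^sub>m d + complex_of_real c \<cdot>\<^sub>m 1\<^sub>m d"
    for c :: real
    by (rule eq_matI) auto
  then show ?thesis
    using assms by (auto intro: loewner_le_add)
qed

lemma trace_power_sum_add_Kant:
  fixes A B :: "nat \<Rightarrow> complex mat" and a b p :: real
  assumes n: "1 \<le> n" and a: "0 < a" and ab: "a < b" and p0: "p \<noteq> 0"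
    and A: "\<And>i. i < n \<Longrightarrow> loewner_le d (a \<cdot>\<^sub>m 1\<^sub>m d) (A i) \<and> loewner_le d (A i) (b \<cdot>\<^sub>m 1\<^sub>m d)"
    and B: "\<And>i. i < n \<Longrightarrow> loewner_le d (a \<cdot>\<^sub>m 1\<^sub>m d) (B i) \<and> loewner_le d (B i) (b \<cdot>\<^sub>m 1\<^sub>m d)"
  defines "T \<equiv> \<lambda>X. Re (mtrace (mat_powr d (msum d (\<lambda>i. mat_powr d (X i) p) n) (1 / p)))"
    and "\<kappa> \<equiv> Kant (b / a) p powr (1 / p)"
  shows "1 \<le> p \<Longrightarrow> (T A + T B) / \<kappa> \<le> T (\<lambda>i. A i + B i) \<and> T (\<lambda>i. A i + B i) \<le> \<kappa> * (T A + T B)"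
    and "p \<le> 1 \<Longrightarrow> \<kappa> * (T A + T B) \<le> T (\<lambda>i. A i + B i) \<and> T (\<lambda>i. A i + B i) \<le> (T A + T B) / \<kappa>"
proof -
  define L where "L X = real n powr (1 / p) / real n * (\<Sum>i<n. Re (mtrace (X i)))" for X
  have AB: "loewner_le d ((2 * a) \<cdot>\<^sub>m 1\<^sub>m d) (A i + B i) \<and> loewner_le d (A i + B i) ((2 * b) \<cdot>\<^sub>m 1\<^sub>m d)"
    if "i < n" for i
    using loewner_bounds_add[OF A[OF that] B[OF that]] .
  have "Re (mtrace (A i + B i)) = Re (mtrace (A i)) + Re (mtrace (B i))" if "i < n" for i
  proof -
    have "A i \<in> carrier_mat d d" "B i \<in> carrier_mat d d"
      using A[OF that] B[OF that] unfolding loewner_le_def hermitian_def by auto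
    then show ?thesis by (simp add: mtrace_add)
  qed
  then have L_add: "L (\<lambda>i. A i + B i) = L A + L B"
    unfolding L_def by (simp add: sum.distrib distrib_left add_divide_distrib)
  have \<kappa>: "0 < \<kappa>" unfolding \<kappa>_def using Kant_pos[of "b / a" p] a ab p0 by simp
  have a2: "0 < 2 * a" "2 * a < 2 * b" using a ab by simp_all
  note bounds = trace_power_sum_root_Kant[where X = A, OF n a ab p0 A]
    trace_power_sum_root_Kant[where X = B, OF n a ab p0 B]
    trace_power_sum_root_Kant[where X = "\<lambda>i. A i + B i", OF n a2 p0 AB]
  show "1 \<le> p \<Longrightarrow> (T A + T B) / \<kappa> \<le> T (\<lambda>i. A i + B i) \<and> T (\<lambda>i. A i + B i) \<le> \<kappa> * (T A + T B)"
    using two_sided_bounds_add[where l = 1 and u = \<kappa> and Lab = "L (\<lambda>i. A i + B i)", OF _ \<kappa> L_add]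
      bounds(1,3,5) unfolding T_def L_def \<kappa>_def by simp
  show "p \<le> 1 \<Longrightarrow> \<kappa> * (T A + T B) \<le> T (\<lambda>i. A i + B i) \<and> T (\<lambda>i. A i + B i) \<le> (T A + T B) / \<kappa>"
    using two_sided_bounds_add[where l = \<kappa> and u = 1 and Lab = "L (\<lambda>i. A i + B i)", OF \<kappa> _ L_add]
      bounds(2,4,6) unfolding T_def L_def \<kappa>_def by simp
qed

theorem corollary4p9:
  fixes d n :: nat and A B :: "nat \<Rightarrow> complex mat" and m M :: real
  assumes "n \<ge> 1"
    and "0 < m" and "m < M"
    and "\<And>i. i < n \<Longrightarrow> pos_def d (A i) \<and> pos_def d (B i)"
    and "\<And>i. i < n \<Longrightarrow> loewner_le d (m \<cdot>\<^sub>m 1\<^sub>m d) (A i) \<and> loewner_le d (A i) (M \<cdot>\<^sub>m 1\<^sub>m d)"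
    and "\<And>i. i < n \<Longrightarrow> loewner_le d (m \<cdot>\<^sub>m 1\<^sub>m d) (B i) \<and> loewner_le d (B i) (M \<cdot>\<^sub>m 1\<^sub>m d)"
  defines "h \<equiv> M / m"
  defines "TA \<equiv> \<lambda>p. Re (mtrace (mat_powr d (msum d (\<lambda>i. mat_powr d (A i) p) n) (1 / p)))"
  defines "TB \<equiv> \<lambda>p. Re (mtrace (mat_powr d (msum d (\<lambda>i. mat_powr d (B i) p) n) (1 / p)))"
  defines "TAB \<equiv> \<lambda>p. Re (mtrace (mat_powr d (msum d (\<lambda>i. mat_powr d (A i + B i) p) n) (1 / p)))"
  shows "(\<forall>p::real. p \<le> 1 \<and> p \<noteq> 0 \<longrightarrow>
            Kant h p powr (1 / p) * (TA p + TB p) \<le> TAB p \<and>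
            TAB p \<le> Kant h p powr (- 1 / p) * (TA p + TB p))
       \<and> (\<forall>p::real. p \<ge> 1 \<longrightarrow>
            Kant h p powr (- 1 / p) * (TA p + TB p) \<le> TAB p \<and>
            TAB p \<le> Kant h p powr (1 / p) * (TA p + TB p))"
proof -
  have h: "1 < h" unfolding h_def using assms(2,3) by simp
  have inv: "Kant h p powr (- 1 / p) = 1 / Kant h p powr (1 / p)" for p
    using Kant_pos[OF h] by (simp add: powr_minus_divide)
  note bounds = trace_power_sum_add_Kant[where A = A and B = B, OF assms(1-3) _ assms(5,6), folded h_def]
  show ?thesis
    unfolding TA_def TB_def TAB_def inv using bounds by auto
qed

end
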